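(* Let $A_1,\dots,A_m\in\mathbb{C}^{n\times n}$ be Hermitian matrices and fix $t\ge1$. (a) The map sending an ordered $*$-simultaneous block decomposition $(V_1,\dots,V_t)$ of $A_1,\dots,A_m$ to $(\epsilon_1,\dots,\epsilon_t)$, with $\epsilon_j$ the projection of $\mathbb{C}^n$ onto $V_j$ along $\bigoplus_{l\ne j}V_l$, is a bijection onto the set of ordered complete sets of $t$ orthogonal idempotents of $Z(A_1,\dots,A_m)$. In particular, there exist $P\in\mathrm{GL}_n(\mathbb{C})$ and positive integers $n_1,\dots,n_t$ summing to $n$ such that each $P^*A_iP$ is block diagonal with blocks of sizes $n_1,\dots,n_t$ if and only if $Z(A_1,\dots,A_m)$ contains a complete set of $t$ orthogonal idempotents. (b) Restricting (a) to decompositions whose subspaces $V_j$ are pairwise orthogonal for the standard Hermitian inner product, the same map (now $\epsilon_j$ is the orthogonal projection onto $V_j$) is a bijection onto the ordered complete sets of $t$ orthogonal idempotents of $Z(A_1,\dots,A_m)$ consisting of Hermitian matrices; in particular a unitary $U$ with every $U^*A_iU$ block diagonal with $t$ blocks exists if and only if $Z(A_1,\dots,A_m)$ contains a complete set of $t$ orthogonal idempotents that are Hermitian matrices.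
   Context: For Hermitian $A_1,\dots,A_m\in\mathbb{C}^{n\times n}$, the center is $Z(A_1,\dots,A_m)=\{X\in\mathbb{C}^{n\times n} : (A_iX)^*=A_iX \text{ for all } i\}$, where $^*$ denotes conjugate transpose. An ordered $*$-simultaneous block decomposition of length $t$ is a $t$-tuple $(V_1,\dots,V_t)$ of nonzero subspaces of $\mathbb{C}^n$ with $\mathbb{C}^n=V_1\oplus\cdots\oplus V_t$ and $x^*A_iy=0$ for all $i$, all $j\neq l$, $x\in V_j$, $y\in V_l$. An ordered complete set of $t$ orthogonal idempotents of the center is a $t$-tuple of nonzero matrices $\epsilon_1,\dots,\epsilon_t\in Z(A_1,\dots,A_m)$ with $\epsilon_j^2=\epsilon_j$, $\epsilon_j\epsilon_l=0$ for $j\neq l$, and $\sum_j\epsilon_j=I_n$. *)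

theory Defs
  imports "Jordan_Normal_Form.Matrix"
begin

text \<open>All matrices are n x n complex matrices (Jordan_Normal_Form 'complex mat' with
  carrier_mat n n); vectors are elements of carrier_vec n.  Ordered t-tuples are
  represented as lists of length t.\<close>

definition cadj :: "complex mat \<Rightarrow> complex mat" where
  "cadj A = transpose_mat (map_mat cnj A)"

definition hermitian_mat :: "nat \<Rightarrow> complex mat \<Rightarrow> bool" where
  "hermitian_mat n A \<longleftrightarrow> A \<in> carrier_mat n n \<and> cadj A = A"

definition unitary_mat :: "nat \<Rightarrow> complex mat \<Rightarrow> bool" where
  "unitary_mat n U \<longleftrightarrow> U \<in> carrier_mat n n \<and> cadj U * U = 1\<^sub>m n"

definition hform :: "complex mat \<Rightarrow> complex vec \<Rightarrow> complex vec \<Rightarrow> complex" where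
  "hform A x y = map_vec cnj x \<bullet> (A *\<^sub>v y)"

definition hinner :: "complex vec \<Rightarrow> complex vec \<Rightarrow> complex" where
  "hinner x y = map_vec cnj x \<bullet> y"

definition center :: "nat \<Rightarrow> complex mat list \<Rightarrow> complex mat set" where
  "center n As = {X \<in> carrier_mat n n. \<forall>A \<in> set As. cadj (A * X) = A * X}"

definition msum :: "nat \<Rightarrow> complex mat list \<Rightarrow> complex mat" where
  "msum n es = foldr (+) es (0\<^sub>m n n)"

definition vsum :: "nat \<Rightarrow> complex vec list \<Rightarrow> complex vec" where
  "vsum n ws = foldr (+) ws (0\<^sub>v n)"

definition orth_idempotents :: "nat \<Rightarrow> complex mat list \<Rightarrow> nat \<Rightarrow> complex mat list \<Rightarrow> bool" where
  "orth_idempotents n As t es \<longleftrightarrow>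
     length es = t \<and>
     (\<forall>j<t. es ! j \<in> center n As \<and> es ! j \<noteq> 0\<^sub>m n n \<and> es ! j * es ! j = es ! j) \<and>
     (\<forall>j<t. \<forall>l<t. j \<noteq> l \<longrightarrow> es ! j * es ! l = 0\<^sub>m n n) \<and>
     msum n es = 1\<^sub>m n"

definition csubspace :: "nat \<Rightarrow> complex vec set \<Rightarrow> bool" where
  "csubspace n V \<longleftrightarrow> V \<subseteq> carrier_vec n \<and> 0\<^sub>v n \<in> V \<and>
     (\<forall>x\<in>V. \<forall>y\<in>V. x + y \<in> V) \<and> (\<forall>c. \<forall>x\<in>V. c \<cdot>\<^sub>v x \<in> V)"

definition direct_sum_decomp :: "nat \<Rightarrow> complex vec set list \<Rightarrow> bool" where
  "direct_sum_decomp n Vs \<longleftrightarrow>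
     (\<forall>j<length Vs. csubspace n (Vs ! j)) \<and>
     (\<forall>v \<in> carrier_vec n. \<exists>!ws. length ws = length Vs \<and>
         (\<forall>j<length Vs. ws ! j \<in> Vs ! j) \<and> vsum n ws = v)"

definition star_block_decomp :: "nat \<Rightarrow> complex mat list \<Rightarrow> nat \<Rightarrow> complex vec set list \<Rightarrow> bool" where
  "star_block_decomp n As t Vs \<longleftrightarrow>
     length Vs = t \<and> direct_sum_decomp n Vs \<and>
     (\<forall>j<t. Vs ! j \<noteq> {0\<^sub>v n}) \<and>
     (\<forall>A \<in> set As. \<forall>j<t. \<forall>l<t. j \<noteq> l \<longrightarrow>
        (\<forall>x \<in> Vs ! j. \<forall>y \<in> Vs ! l. hform A x y = 0))"

definition pairwise_orth :: "complex vec set list \<Rightarrow> bool" where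
  "pairwise_orth Vs \<longleftrightarrow> (\<forall>j<length Vs. \<forall>l<length Vs. j \<noteq> l \<longrightarrow>
     (\<forall>x \<in> Vs ! j. \<forall>y \<in> Vs ! l. hinner x y = 0))"

definition proj_along :: "nat \<Rightarrow> complex vec set list \<Rightarrow> nat \<Rightarrow> complex mat" where
  "proj_along n Vs j = (THE E. E \<in> carrier_mat n n \<and>
     (\<forall>v \<in> Vs ! j. E *\<^sub>v v = v) \<and>
     (\<forall>l<length Vs. l \<noteq> j \<longrightarrow> (\<forall>v \<in> Vs ! l. E *\<^sub>v v = 0\<^sub>v n)))"

definition proj_map :: "nat \<Rightarrow> complex vec set list \<Rightarrow> complex mat list" where
  "proj_map n Vs = map (proj_along n Vs) [0..<length Vs]"

text \<open>Block diagonality with consecutive diagonal blocks of sizes ns!0, ..., ns!(t-1):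
  block j occupies the indices sum(take j ns) .. sum(take (j+1) ns) - 1.\<close>
definition in_block :: "nat list \<Rightarrow> nat \<Rightarrow> nat \<Rightarrow> bool" where
  "in_block ns j i \<longleftrightarrow> sum_list (take j ns) \<le> i \<and> i < sum_list (take (Suc j) ns)"

definition block_diag :: "nat \<Rightarrow> nat list \<Rightarrow> complex mat \<Rightarrow> bool" where
  "block_diag n ns M \<longleftrightarrow> M \<in> carrier_mat n n \<and>
     (\<forall>i<n. \<forall>k<n. (\<not> (\<exists>j<length ns. in_block ns j i \<and> in_block ns j k)) \<longrightarrow> M $$ (i,k) = 0)"

definition block_sizes :: "nat \<Rightarrow> nat \<Rightarrow> nat list \<Rightarrow> bool" where
  "block_sizes n t ns \<longleftrightarrow> length ns = t \<and> (\<forall>j<t. ns ! j > 0) \<and> sum_list ns = n"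

end

theory Submission
  imports Defs "Jordan_Normal_Form.Determinant"
begin

text \<open>The projections \<open>\<epsilon>\<^sub>j\<close> of a direct sum decomposition \<open>\<complex>\<^sup>n = V\<^sub>1 \<oplus> \<dots> \<oplus> V\<^sub>t\<close>
  form a complete set of orthogonal idempotents whose fixed spaces are the \<open>V\<^sub>j\<close>, and every
  such set arises this way. Writing \<open>x = \<Sum> x\<^sub>j\<close>, \<open>y = \<Sum> y\<^sub>j\<close> in components,
  \<open>x\<^sup>* A \<epsilon>\<^sub>j y = x\<^sub>j\<^sup>* A y\<^sub>j\<close> for a \<open>*\<close>-simultaneous decomposition, which is symmetric in
  \<open>x, y\<close>; so \<open>A \<epsilon>\<^sub>j\<close> is Hermitian, i.e. \<open>\<epsilon>\<^sub>j\<close> lies in the center. Conversely, if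
  \<open>A \<epsilon>\<^sub>j\<close> is Hermitian and \<open>\<epsilon>\<^sub>j \<epsilon>\<^sub>l = 0\<close>, the fixed spaces of \<open>\<epsilon>\<^sub>j\<close> and \<open>\<epsilon>\<^sub>l\<close> are
  \<open>A\<close>-orthogonal. Taking \<open>A = 1\<close> shows that the \<open>V\<^sub>j\<close> are orthogonal iff the \<open>\<epsilon>\<^sub>j\<close> are
  Hermitian, which gives part (b).

  If \<open>P\<^sup>* A P\<close> is block diagonal for every \<open>A\<close>, the idempotents are \<open>P D\<^sub>j P\<^sup>-\<^sup>1\<close> for the
  coordinate projections \<open>D\<^sub>j\<close> onto the blocks. Conversely, concatenating orthonormal bases
  (Gram-Schmidt) of the fixed spaces of the \<open>\<epsilon>\<^sub>j\<close> gives the columns of \<open>P\<close>; the rows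
  \<open>q\<^sup>* \<epsilon>\<^sub>j\<close> form a right inverse of \<open>P\<close>, a trace count shows that \<open>P\<close> is square, and
  \<open>P\<close> is unitary when the \<open>\<epsilon>\<^sub>j\<close> are Hermitian, since then the rows are the \<open>q\<^sup>*\<close>.\<close>

section \<open>Sums, conjugate transposes and the Hermitian inner product\<close>

lemma hform_eq_hinner: "hform A x y = hinner x (A *\<^sub>v y)"
  unfolding hform_def hinner_def ..

lemma hinner_eq_cscalar_prod:
  assumes "x \<in> carrier_vec n" "y \<in> carrier_vec n"
  shows "hinner x y = y \<bullet>c x"
proof -
  have "map_vec cnj x = conjugate x"
    unfolding conjugate_vec_def by (rule eq_vecI) auto
  then show ?thesis unfolding hinner_def using assms by (simp add: comm_scalar_prod[of _ n])
qed

lemma vsum_Nil[simp]: "vsum n [] = 0\<^sub>v n"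
  unfolding vsum_def by simp

lemma vsum_Cons[simp]: "vsum n (w # ws) = w + vsum n ws"
  unfolding vsum_def by simp

lemma vsum_carrier[simp]: "set ws \<subseteq> carrier_vec n \<Longrightarrow> vsum n ws \<in> carrier_vec n"
  by (induct ws) auto

lemma dim_vsum[simp]: "set ws \<subseteq> carrier_vec n \<Longrightarrow> dim_vec (vsum n ws) = n"
  using vsum_carrier carrier_vecD by blast

lemma index_vsum:
  "set ws \<subseteq> carrier_vec n \<Longrightarrow> i < n \<Longrightarrow> vsum n ws $ i = (\<Sum>w\<leftarrow>ws. w $ i)"
  by (induct ws) auto

lemma vsum_append:
  assumes "set ws \<subseteq> carrier_vec n" "set us \<subseteq> carrier_vec n"
  shows "vsum n (ws @ us) = vsum n ws + vsum n us"
  by (rule eq_vecI) (use assms in \<open>auto simp: index_vsum\<close>)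

lemma vsum_concat:
  "\<forall>ws\<in>set wss. set ws \<subseteq> carrier_vec n \<Longrightarrow> vsum n (concat wss) = vsum n (map (vsum n) wss)"
proof (induct wss)
  case (Cons ws wss)
  then have "set (concat wss) \<subseteq> carrier_vec n" by auto
  with Cons show ?case by (simp add: vsum_append)
qed simp

lemma sum_list_map_single:
  assumes "j < length ws" "\<forall>l<length ws. l \<noteq> j \<longrightarrow> f (ws ! l) = (0::'a::comm_monoid_add)"
  shows "(\<Sum>w\<leftarrow>ws. f w) = f (ws ! j)"
proof -
  have "(\<Sum>w\<leftarrow>ws. f w) = (\<Sum>l\<in>{0..<length ws}. f (ws ! l))"
    by (simp add: sum_list_sum_nth)
  also have "\<dots> = f (ws ! j) + (\<Sum>l\<in>{0..<length ws} - {j}. f (ws ! l))"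
    by (rule sum.remove) (use assms in auto)
  also have "(\<Sum>l\<in>{0..<length ws} - {j}. f (ws ! l)) = 0"
    by (rule sum.neutral) (use assms in auto)
  finally show ?thesis by simp
qed

lemma vsum_single:
  assumes "set ws \<subseteq> carrier_vec n" "j < length ws" "\<forall>l<length ws. l \<noteq> j \<longrightarrow> ws ! l = 0\<^sub>v n"
  shows "vsum n ws = ws ! j"
proof (rule eq_vecI)
  have wj: "ws ! j \<in> carrier_vec n" using assms nth_mem by blast
  then show "dim_vec (vsum n ws) = dim_vec (ws ! j)" using assms by simp
  fix i assume "i < dim_vec (ws ! j)"
  with wj have "i < n" by simp
  then show "vsum n ws $ i = ws ! j $ i"
    using assms by (simp add: index_vsum sum_list_map_single[where j = j])
qed

lemma mult_zero_vec[simp]: "M \<in> carrier_mat nr n \<Longrightarrow> M *\<^sub>v 0\<^sub>v n = 0\<^sub>v nr"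
  by (rule eq_vecI) auto

lemma zero_mat_mult_vec[simp]: "y \<in> carrier_vec n \<Longrightarrow> 0\<^sub>m nr n *\<^sub>v y = 0\<^sub>v nr"
  by (rule eq_vecI) auto

lemma mult_mat_vec_vsum:
  assumes "M \<in> carrier_mat n n" "set ws \<subseteq> carrier_vec n"
  shows "M *\<^sub>v vsum n ws = vsum n (map ((*\<^sub>v) M) ws)"
  using assms(2) by (induct ws) (use assms(1) in \<open>auto simp: mult_add_distrib_mat_vec\<close>)

lemma csubspace_vsum: "csubspace n V \<Longrightarrow> set ws \<subseteq> V \<Longrightarrow> vsum n ws \<in> V"
  by (induct ws) (auto simp: csubspace_def)

lemma msum_Nil[simp]: "msum n [] = 0\<^sub>m n n"
  unfolding msum_def by simp

lemma msum_Cons[simp]: "msum n (E # es) = E + msum n es"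
  unfolding msum_def by simp

lemma msum_carrier[simp]: "set es \<subseteq> carrier_mat n n \<Longrightarrow> msum n es \<in> carrier_mat n n"
  by (induct es) auto

lemma index_msum:
  assumes "set es \<subseteq> carrier_mat n n" "i < n" "k < n"
  shows "msum n es $$ (i, k) = (\<Sum>E\<leftarrow>es. E $$ (i, k))"
  using assms(1)
proof (induct es)
  case (Cons E es)
  then have "msum n es \<in> carrier_mat n n" "E \<in> carrier_mat n n" by auto
  with Cons assms(2,3) show ?case using carrier_matD[of "msum n es" n n] by simp
qed (use assms in simp)

lemma msum_mult_vec:
  assumes "set es \<subseteq> carrier_mat n n" "v \<in> carrier_vec n"
  shows "msum n es *\<^sub>v v = vsum n (map (\<lambda>E. E *\<^sub>v v) es)"
  using assms(1) by (induct es) (use assms(2) in \<open>auto simp: add_mult_distrib_mat_vec\<close>)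

lemma mult_mat_vec_cols:
  assumes "M \<in> carrier_mat n k" "v \<in> carrier_vec k"
  shows "M *\<^sub>v v = vsum n (map (\<lambda>i. v $ i \<cdot>\<^sub>v col M i) [0..<k])"
proof (rule eq_vecI)
  have cols: "set (map (\<lambda>i. v $ i \<cdot>\<^sub>v col M i) [0..<k]) \<subseteq> carrier_vec n"
    using assms by auto
  then show "dim_vec (M *\<^sub>v v) = dim_vec (vsum n (map (\<lambda>i. v $ i \<cdot>\<^sub>v col M i) [0..<k]))"
    using assms by simp
  fix r assume "r < dim_vec (vsum n (map (\<lambda>i. v $ i \<cdot>\<^sub>v col M i) [0..<k]))"
  with cols have r: "r < n" by simp
  then show "(M *\<^sub>v v) $ r = vsum n (map (\<lambda>i. v $ i \<cdot>\<^sub>v col M i) [0..<k]) $ r"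
    using assms by (simp add: index_vsum[OF cols r] scalar_prod_def sum_list_sum_nth
        atLeast0LessThan mult.commute)
qed

lemma mult_carrier_mat_square[simp]:
  "A \<in> carrier_mat n n \<Longrightarrow> B \<in> carrier_mat n n \<Longrightarrow> A * B \<in> carrier_mat n n"
  by simp

lemma mult_unit_vec_eq_col:
  fixes A :: "complex mat"
  assumes "A \<in> carrier_mat nr n" "i < n"
  shows "A *\<^sub>v unit_vec n i = col A i"
proof (rule eq_vecI)
  fix r assume "r < dim_vec (col A i)"
  with assms have r: "r < nr" by simp
  have "row A r \<bullet> unit_vec n i = row A r $ i" using scalar_prod_right_unit assms by blast
  then show "(A *\<^sub>v unit_vec n i) $ r = col A i $ r" using assms r by simp
qed (use assms in simp)

lemma mat_eq_by_mult_vec: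
  fixes A :: "complex mat"
  assumes "A \<in> carrier_mat n n" "B \<in> carrier_mat n n"
    and "\<And>v. v \<in> carrier_vec n \<Longrightarrow> A *\<^sub>v v = B *\<^sub>v v"
  shows "A = B"
proof (rule mat_col_eqI)
  fix i assume "i < dim_col B"
  with assms have "i < n" by simp
  then show "col A i = col B i"
    using mult_unit_vec_eq_col[OF assms(1) \<open>i < n\<close>] mult_unit_vec_eq_col[OF assms(2) \<open>i < n\<close>]
      assms(3)[of "unit_vec n i"] by simp
qed (use assms in auto)

lemma mat_nonzero_mult_vec:
  fixes E :: "complex mat"
  assumes "E \<in> carrier_mat n n" "E \<noteq> 0\<^sub>m n n"
  obtains v where "v \<in> carrier_vec n" "E *\<^sub>v v \<noteq> 0\<^sub>v n"
proof -
  have "\<not> (\<forall>v\<in>carrier_vec n. E *\<^sub>v v = 0\<^sub>m n n *\<^sub>v v)"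
    using assms mat_eq_by_mult_vec[of E n "0\<^sub>m n n"] by auto
  then show ?thesis using that by auto
qed

lemma cadj_carrier[simp]: "A \<in> carrier_mat nr nc \<Longrightarrow> cadj A \<in> carrier_mat nc nr"
  unfolding cadj_def by auto

lemma cadj_dim[simp]: "dim_row (cadj A) = dim_col A" "dim_col (cadj A) = dim_row A"
  unfolding cadj_def by auto

lemma index_cadj[simp]: "i < dim_col A \<Longrightarrow> j < dim_row A \<Longrightarrow> cadj A $$ (i, j) = cnj (A $$ (j, i))"
  unfolding cadj_def by auto

lemma cadj_cadj[simp]: "cadj (cadj A) = A"
  by (rule eq_matI) auto

lemma cadj_one[simp]: "cadj (1\<^sub>m n) = 1\<^sub>m n"
  by (rule eq_matI) auto

lemma cadj_mult:
  assumes "A \<in> carrier_mat nr n" "B \<in> carrier_mat n nc"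
  shows "cadj (A * B) = cadj B * cadj A"
proof (rule eq_matI)
  fix i j assume "i < dim_row (cadj B * cadj A)" "j < dim_col (cadj B * cadj A)"
  with assms have i: "i < nc" and j: "j < nr" by auto
  have "cadj (A * B) $$ (i, j) = cnj (row A j \<bullet> col B i)" using assms i j by simp
  also have "\<dots> = (\<Sum>k<n. cnj (A $$ (j, k)) * cnj (B $$ (k, i)))"
    using assms i j unfolding scalar_prod_def by (simp add: atLeast0LessThan)
  also have "\<dots> = row (cadj B) i \<bullet> col (cadj A) j"
    using assms i j unfolding scalar_prod_def by (auto simp: atLeast0LessThan mult.commute intro!: sum.cong)
  also have "\<dots> = (cadj B * cadj A) $$ (i, j)" using assms i j by simp
  finally show "cadj (A * B) $$ (i, j) = (cadj B * cadj A) $$ (i, j)" .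
qed (use assms in auto)

lemma map_vec_cnj_mult_mat_vec:
  assumes "M \<in> carrier_mat nr nc" "x \<in> carrier_vec nc"
  shows "map_vec cnj (M *\<^sub>v x) = map_mat cnj M *\<^sub>v map_vec cnj x"
  by (rule eq_vecI) (use assms in \<open>auto simp: scalar_prod_def\<close>)

lemma hinner_add_right:
  "x \<in> carrier_vec n \<Longrightarrow> y \<in> carrier_vec n \<Longrightarrow> z \<in> carrier_vec n \<Longrightarrow>
   hinner x (y + z) = hinner x y + hinner x z"
  unfolding hinner_def by (rule scalar_prod_add_distrib[of _ n]) auto

lemma hinner_add_left:
  "x \<in> carrier_vec n \<Longrightarrow> y \<in> carrier_vec n \<Longrightarrow> z \<in> carrier_vec n \<Longrightarrow>
   hinner (x + y) z = hinner x z + hinner y z"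
  unfolding hinner_def by (auto simp: scalar_prod_def sum.distrib algebra_simps)

lemma hinner_smult_right:
  "x \<in> carrier_vec n \<Longrightarrow> y \<in> carrier_vec n \<Longrightarrow> hinner x (c \<cdot>\<^sub>v y) = c * hinner x y"
  unfolding hinner_def by (auto simp: scalar_prod_def sum_distrib_left algebra_simps)

lemma hinner_smult_left:
  "x \<in> carrier_vec n \<Longrightarrow> y \<in> carrier_vec n \<Longrightarrow> hinner (c \<cdot>\<^sub>v x) y = cnj c * hinner x y"
  unfolding hinner_def by (auto simp: scalar_prod_def sum_distrib_left algebra_simps)

lemma hinner_zero_right[simp]: "x \<in> carrier_vec n \<Longrightarrow> hinner x (0\<^sub>v n) = 0"
  unfolding hinner_def by (auto simp: scalar_prod_def)

lemma hinner_zero_left[simp]: "x \<in> carrier_vec n \<Longrightarrow> hinner (0\<^sub>v n) x = 0"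
  unfolding hinner_def by (auto simp: scalar_prod_def)

lemma hinner_commute:
  "x \<in> carrier_vec n \<Longrightarrow> y \<in> carrier_vec n \<Longrightarrow> hinner y x = cnj (hinner x y)"
  unfolding hinner_def by (auto simp: scalar_prod_def mult.commute)

lemma hinner_self_gt_0: "x \<in> carrier_vec n \<Longrightarrow> x \<noteq> 0\<^sub>v n \<Longrightarrow> hinner x x > 0"
  by (simp add: hinner_eq_cscalar_prod)

lemma hinner_vsum_left:
  assumes "set ws \<subseteq> carrier_vec n" "y \<in> carrier_vec n"
  shows "hinner (vsum n ws) y = (\<Sum>w\<leftarrow>ws. hinner w y)"
  using assms(1) by (induct ws) (use assms(2) in \<open>auto simp: hinner_add_left\<close>)

lemma hinner_vsum_right:
  assumes "set ws \<subseteq> carrier_vec n" "y \<in> carrier_vec n"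
  shows "hinner y (vsum n ws) = (\<Sum>w\<leftarrow>ws. hinner y w)"
  using assms(1) by (induct ws) (use assms(2) in \<open>auto simp: hinner_add_right\<close>)

lemma hinner_unit_vec:
  assumes w: "w \<in> carrier_vec n" and i: "i < n"
  shows "hinner (unit_vec n i) w = w $ i"
proof -
  have "map_vec cnj (unit_vec n i) = (unit_vec n i :: complex vec)"
    by (rule eq_vecI) (auto simp: i)
  then show ?thesis unfolding hinner_def using scalar_prod_left_unit[OF w i] by simp
qed

lemma eq_vec_by_hinner:
  assumes "u \<in> carrier_vec n" "w \<in> carrier_vec n"
    and "\<And>x. x \<in> carrier_vec n \<Longrightarrow> hinner x u = hinner x w"
  shows "u = w"
proof (rule eq_vecI)
  fix i assume "i < dim_vec w"
  with assms have i: "i < n" by simp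
  show "u $ i = w $ i"
    using assms(3)[of "unit_vec n i"] hinner_unit_vec[OF assms(1) i] hinner_unit_vec[OF assms(2) i] by simp
qed (use assms in simp)

lemma hinner_adjoint:
  assumes M: "M \<in> carrier_mat nr nc" and x: "x \<in> carrier_vec nc" and y: "y \<in> carrier_vec nr"
  shows "hinner (M *\<^sub>v x) y = hinner x (cadj M *\<^sub>v y)"
proof -
  let ?A = "map_mat cnj M" and ?cx = "map_vec cnj x"
  have A: "?A \<in> carrier_mat nr nc" and cx: "?cx \<in> carrier_vec nc" using M x by auto
  have "hinner (M *\<^sub>v x) y = (?A *\<^sub>v ?cx) \<bullet> y"
    unfolding hinner_def using map_vec_cnj_mult_mat_vec[OF M x] by simp
  also have "\<dots> = y \<bullet> (?A *\<^sub>v ?cx)" by (rule comm_scalar_prod[of _ nr]) (use A cx y in auto)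
  also have "\<dots> = (transpose_mat ?A *\<^sub>v y) \<bullet> ?cx" using transpose_vec_mult_scalar[OF A cx y] by simp
  also have "\<dots> = ?cx \<bullet> (transpose_mat ?A *\<^sub>v y)" by (rule comm_scalar_prod[of _ nc]) (use A cx y in auto)
  finally show ?thesis unfolding hinner_def cadj_def .
qed

lemma cadj_eq_iff_hinner:
  assumes "M \<in> carrier_mat n n"
  shows "cadj M = M \<longleftrightarrow>
    (\<forall>x\<in>carrier_vec n. \<forall>y\<in>carrier_vec n. hinner (M *\<^sub>v x) y = hinner x (M *\<^sub>v y))"
proof
  assume "cadj M = M"
  then show "\<forall>x\<in>carrier_vec n. \<forall>y\<in>carrier_vec n. hinner (M *\<^sub>v x) y = hinner x (M *\<^sub>v y)"
    using hinner_adjoint[OF assms] by metis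
next
  assume sym: "\<forall>x\<in>carrier_vec n. \<forall>y\<in>carrier_vec n. hinner (M *\<^sub>v x) y = hinner x (M *\<^sub>v y)"
  show "cadj M = M"
  proof (rule mat_eq_by_mult_vec[of _ n])
    fix y :: "complex vec" assume y: "y \<in> carrier_vec n"
    show "cadj M *\<^sub>v y = M *\<^sub>v y"
      by (rule eq_vec_by_hinner[of _ n])
        (use assms y sym hinner_adjoint[OF assms] mult_mat_vec_carrier[of "cadj M" n n] in auto)
  qed (use assms in auto)
qed

section \<open>Direct sum decompositions and their projections\<close>

definition components :: "nat \<Rightarrow> complex vec set list \<Rightarrow> complex vec \<Rightarrow> complex vec list" where
  "components n Vs v =
     (THE ws. length ws = length Vs \<and> (\<forall>j<length Vs. ws ! j \<in> Vs ! j) \<and> vsum n ws = v)"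

lemma direct_sum_decomp_csubspace:
  "direct_sum_decomp n Vs \<Longrightarrow> j < length Vs \<Longrightarrow> csubspace n (Vs ! j)"
  unfolding direct_sum_decomp_def by auto

lemma direct_sum_decomp_carrier:
  "direct_sum_decomp n Vs \<Longrightarrow> j < length Vs \<Longrightarrow> Vs ! j \<subseteq> carrier_vec n"
  using direct_sum_decomp_csubspace unfolding csubspace_def by blast

lemma components:
  assumes "direct_sum_decomp n Vs" "v \<in> carrier_vec n"
  shows "length (components n Vs v) = length Vs"
    and "\<forall>j<length Vs. components n Vs v ! j \<in> Vs ! j"
    and "vsum n (components n Vs v) = v"
proof -
  have "\<exists>!ws. length ws = length Vs \<and> (\<forall>j<length Vs. ws ! j \<in> Vs ! j) \<and> vsum n ws = v"
    using assms unfolding direct_sum_decomp_def by blast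
  from theI'[OF this]
  show "length (components n Vs v) = length Vs" "\<forall>j<length Vs. components n Vs v ! j \<in> Vs ! j"
    "vsum n (components n Vs v) = v"
    unfolding components_def by auto
qed

lemma components_unique:
  assumes "direct_sum_decomp n Vs" "v \<in> carrier_vec n"
    and "length ws = length Vs" "\<forall>j<length Vs. ws ! j \<in> Vs ! j" "vsum n ws = v"
  shows "components n Vs v = ws"
proof -
  have "\<exists>!ws. length ws = length Vs \<and> (\<forall>j<length Vs. ws ! j \<in> Vs ! j) \<and> vsum n ws = v"
    using assms(1,2) unfolding direct_sum_decomp_def by blast
  from the1_equality[OF this] show ?thesis unfolding components_def using assms(3-) by auto
qed

lemma components_carrier:
  assumes "direct_sum_decomp n Vs" "v \<in> carrier_vec n"
  shows "set (components n Vs v) \<subseteq> carrier_vec n"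
proof
  fix w assume "w \<in> set (components n Vs v)"
  then obtain j where "j < length (components n Vs v)" "w = components n Vs v ! j"
    by (auto simp: in_set_conv_nth)
  then show "w \<in> carrier_vec n"
    using components[OF assms] direct_sum_decomp_carrier[OF assms(1), of j] by auto
qed

lemma components_of_member:
  assumes d: "direct_sum_decomp n Vs" and j: "j < length Vs" and v: "v \<in> Vs ! j"
  shows "components n Vs v = map (\<lambda>l. if l = j then v else 0\<^sub>v n) [0..<length Vs]"
proof -
  let ?ws = "map (\<lambda>l. if l = j then v else 0\<^sub>v n) [0..<length Vs]"
  have vc: "v \<in> carrier_vec n" using direct_sum_decomp_carrier[OF d j] v by auto
  have "vsum n ?ws = ?ws ! j" by (rule vsum_single) (use vc j in auto)
  moreover have "\<forall>l<length Vs. ?ws ! l \<in> Vs ! l"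
    using direct_sum_decomp_csubspace[OF d] v unfolding csubspace_def by auto
  ultimately show ?thesis using j by (intro components_unique[OF d vc]) auto
qed

definition is_proj_along :: "nat \<Rightarrow> complex vec set list \<Rightarrow> nat \<Rightarrow> complex mat \<Rightarrow> bool" where
  "is_proj_along n Vs j E \<longleftrightarrow> E \<in> carrier_mat n n \<and>
     (\<forall>v \<in> Vs ! j. E *\<^sub>v v = v) \<and>
     (\<forall>l<length Vs. l \<noteq> j \<longrightarrow> (\<forall>v \<in> Vs ! l. E *\<^sub>v v = 0\<^sub>v n))"

lemma is_proj_along_mult_vec:
  assumes d: "direct_sum_decomp n Vs" and j: "j < length Vs" and E: "is_proj_along n Vs j E"
    and v: "v \<in> carrier_vec n"
  shows "E *\<^sub>v v = components n Vs v ! j"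
proof -
  let ?c = "components n Vs v"
  note c = components[OF d v]
  have Ec: "E \<in> carrier_mat n n" using E unfolding is_proj_along_def by auto
  have cc: "set ?c \<subseteq> carrier_vec n" by (rule components_carrier[OF d v])
  have "E *\<^sub>v v = vsum n (map ((*\<^sub>v) E) ?c)" using mult_mat_vec_vsum[OF Ec cc] c(3) by simp
  also have "\<dots> = map ((*\<^sub>v) E) ?c ! j"
    by (rule vsum_single) (use cc Ec E c j in \<open>auto simp: is_proj_along_def\<close>)
  also have "\<dots> = ?c ! j" using E c j unfolding is_proj_along_def by auto
  finally show ?thesis .
qed

lemma is_proj_along_unique:
  assumes "direct_sum_decomp n Vs" "j < length Vs" "is_proj_along n Vs j E" "is_proj_along n Vs j F"
  shows "E = F"
  using assms is_proj_along_mult_vec[OF assms(1,2)] unfolding is_proj_along_def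
  by (intro mat_eq_by_mult_vec[of _ n]) auto

text \<open>Explicit projections, showing that the description in \<open>proj_along\<close> is satisfiable.\<close>

definition component_mat :: "nat \<Rightarrow> complex vec set list \<Rightarrow> nat \<Rightarrow> complex mat" where
  "component_mat n Vs l = mat n n (\<lambda>(i, k). components n Vs (unit_vec n k) ! l $ i)"

lemma component_mat_carrier: "component_mat n Vs l \<in> carrier_mat n n"
  unfolding component_mat_def by simp

lemma col_component_mat:
  assumes d: "direct_sum_decomp n Vs" and l: "l < length Vs" and k: "k < n"
  shows "col (component_mat n Vs l) k = components n Vs (unit_vec n k) ! l"
proof -
  have "components n Vs (unit_vec n k) ! l \<in> carrier_vec n"
    using components_carrier[OF d unit_vec_carrier] components(1)[OF d unit_vec_carrier] l
    by (metis nth_mem subsetD)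
  then show ?thesis unfolding component_mat_def using k by (intro eq_vecI) auto
qed

lemma component_mat_mult_vec_mem:
  assumes d: "direct_sum_decomp n Vs" and l: "l < length Vs" and v: "v \<in> carrier_vec n"
  shows "component_mat n Vs l *\<^sub>v v \<in> Vs ! l"
proof -
  have "v $ k \<cdot>\<^sub>v col (component_mat n Vs l) k \<in> Vs ! l" if "k < n" for k
    using components(2)[OF d unit_vec_carrier] direct_sum_decomp_csubspace[OF d l] l that
    unfolding col_component_mat[OF d l that] csubspace_def by auto
  then show ?thesis
    unfolding mult_mat_vec_cols[OF component_mat_carrier v]
    by (intro csubspace_vsum[OF direct_sum_decomp_csubspace[OF d l]]) auto
qed

lemma msum_component_mats:
  assumes d: "direct_sum_decomp n Vs"
  shows "msum n (map (component_mat n Vs) [0..<length Vs]) = 1\<^sub>m n"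
proof (rule eq_matI)
  let ?c = "\<lambda>k. components n Vs (unit_vec n k)"
  have Cs: "set (map (component_mat n Vs) [0..<length Vs]) \<subseteq> carrier_mat n n"
    using component_mat_carrier by auto
  then show "dim_row (msum n (map (component_mat n Vs) [0..<length Vs])) = dim_row (1\<^sub>m n :: complex mat)"
    "dim_col (msum n (map (component_mat n Vs) [0..<length Vs])) = dim_col (1\<^sub>m n :: complex mat)"
    using carrier_matD[OF msum_carrier[OF Cs]] by auto
  fix i k assume "i < dim_row (1\<^sub>m n :: complex mat)" "k < dim_col (1\<^sub>m n :: complex mat)"
  then have i: "i < n" and k: "k < n" by auto
  have "msum n (map (component_mat n Vs) [0..<length Vs]) $$ (i, k) = (\<Sum>l<length Vs. ?c k ! l $ i)"
    using index_msum[OF Cs i k] i k by (simp add: component_mat_def sum_list_sum_nth atLeast0LessThan)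
  also have "\<dots> = vsum n (?c k) $ i"
    using components(1)[OF d unit_vec_carrier]
    by (simp add: index_vsum[OF components_carrier[OF d unit_vec_carrier] i] sum_list_sum_nth atLeast0LessThan)
  also have "\<dots> = 1\<^sub>m n $$ (i, k)" using components(3)[OF d, of "unit_vec n k"] i k by simp
  finally show "msum n (map (component_mat n Vs) [0..<length Vs]) $$ (i, k) = 1\<^sub>m n $$ (i, k)" .
qed

lemma components_eq_component_mats:
  assumes d: "direct_sum_decomp n Vs" and v: "v \<in> carrier_vec n"
  shows "components n Vs v = map (\<lambda>l. component_mat n Vs l *\<^sub>v v) [0..<length Vs]"
proof (rule components_unique[OF d v])
  show "\<forall>l<length Vs. map (\<lambda>l. component_mat n Vs l *\<^sub>v v) [0..<length Vs] ! l \<in> Vs ! l"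
    using component_mat_mult_vec_mem[OF d _ v] by simp
  have "set (map (component_mat n Vs) [0..<length Vs]) \<subseteq> carrier_mat n n"
    using component_mat_carrier by auto
  then show "vsum n (map (\<lambda>l. component_mat n Vs l *\<^sub>v v) [0..<length Vs]) = v"
    using msum_mult_vec[of "map (component_mat n Vs) [0..<length Vs]" n v] msum_component_mats[OF d] v
    by (simp add: o_def)
qed simp

lemma is_proj_along_component_mat:
  assumes d: "direct_sum_decomp n Vs" and j: "j < length Vs"
  shows "is_proj_along n Vs j (component_mat n Vs j)"
proof -
  have Mv: "component_mat n Vs j *\<^sub>v v = components n Vs v ! j" if "v \<in> carrier_vec n" for v
    using components_eq_component_mats[OF d that] j by simp
  show ?thesis
    unfolding is_proj_along_def
  proof (intro conjI ballI allI impI)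
    show "component_mat n Vs j \<in> carrier_mat n n" by (rule component_mat_carrier)
    fix v assume "v \<in> Vs ! j"
    then show "component_mat n Vs j *\<^sub>v v = v"
      using Mv components_of_member[OF d j] direct_sum_decomp_carrier[OF d j] j by auto
  next
    fix l v assume l: "l < length Vs" "l \<noteq> j" and v: "v \<in> Vs ! l"
    then show "component_mat n Vs j *\<^sub>v v = 0\<^sub>v n"
      using Mv components_of_member[OF d l(1) v] direct_sum_decomp_carrier[OF d l(1)] j by auto
  qed
qed

lemma proj_along_is_proj_along:
  assumes "direct_sum_decomp n Vs" "j < length Vs"
  shows "is_proj_along n Vs j (proj_along n Vs j)"
proof -
  note E = is_proj_along_component_mat[OF assms]
  have "proj_along n Vs j = (THE E. is_proj_along n Vs j E)"
    unfolding proj_along_def is_proj_along_def by simp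
  also have "\<dots> = component_mat n Vs j" using E is_proj_along_unique[OF assms] by blast
  finally show ?thesis using E by simp
qed

lemma proj_along_eqI:
  "direct_sum_decomp n Vs \<Longrightarrow> j < length Vs \<Longrightarrow> is_proj_along n Vs j E \<Longrightarrow> proj_along n Vs j = E"
  using is_proj_along_unique proj_along_is_proj_along by blast

lemma proj_along_carrier:
  "direct_sum_decomp n Vs \<Longrightarrow> j < length Vs \<Longrightarrow> proj_along n Vs j \<in> carrier_mat n n"
  using proj_along_is_proj_along unfolding is_proj_along_def by blast

lemma proj_along_mult_vec:
  "direct_sum_decomp n Vs \<Longrightarrow> j < length Vs \<Longrightarrow> v \<in> carrier_vec n \<Longrightarrow>
   proj_along n Vs j *\<^sub>v v = components n Vs v ! j"
  using is_proj_along_mult_vec proj_along_is_proj_along by blast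

lemma proj_map_nth[simp]:
  "j < length Vs \<Longrightarrow> proj_map n Vs ! j = proj_along n Vs j"
  "length (proj_map n Vs) = length Vs"
  unfolding proj_map_def by auto

definition fixed_space :: "nat \<Rightarrow> complex mat \<Rightarrow> complex vec set" where
  "fixed_space n E = {v \<in> carrier_vec n. E *\<^sub>v v = v}"

lemma csubspace_fixed_space: "E \<in> carrier_mat n n \<Longrightarrow> csubspace n (fixed_space n E)"
  unfolding csubspace_def fixed_space_def by (auto simp: mult_add_distrib_mat_vec mult_mat_vec)

lemma fixed_space_proj_along:
  assumes d: "direct_sum_decomp n Vs" and j: "j < length Vs"
  shows "fixed_space n (proj_along n Vs j) = Vs ! j"
proof
  show "Vs ! j \<subseteq> fixed_space n (proj_along n Vs j)"
    using proj_along_is_proj_along[OF d j] direct_sum_decomp_carrier[OF d j]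
    unfolding is_proj_along_def fixed_space_def by auto
  show "fixed_space n (proj_along n Vs j) \<subseteq> Vs ! j"
    using proj_along_mult_vec[OF d j] components(2)[OF d] j unfolding fixed_space_def by force
qed

definition resolution_of_identity :: "nat \<Rightarrow> complex mat list \<Rightarrow> bool" where
  "resolution_of_identity n es \<longleftrightarrow> set es \<subseteq> carrier_mat n n \<and>
     (\<forall>j<length es. es ! j * es ! j = es ! j) \<and>
     (\<forall>j<length es. \<forall>l<length es. j \<noteq> l \<longrightarrow> es ! j * es ! l = 0\<^sub>m n n) \<and>
     msum n es = 1\<^sub>m n"

lemma orth_idempotents_iff:
  "orth_idempotents n As t es \<longleftrightarrow> length es = t \<and> resolution_of_identity n es \<and>
     (\<forall>j<t. es ! j \<in> center n As \<and> es ! j \<noteq> 0\<^sub>m n n)"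
  unfolding orth_idempotents_def resolution_of_identity_def center_def
  by (auto simp: in_set_conv_nth)

lemma resolution_of_identity_proj_map:
  assumes d: "direct_sum_decomp n Vs"
  shows "resolution_of_identity n (proj_map n Vs)"
proof -
  let ?E = "proj_along n Vs"
  have Ec: "j < length Vs \<Longrightarrow> ?E j \<in> carrier_mat n n" for j by (rule proj_along_carrier[OF d])
  have Ev: "j < length Vs \<Longrightarrow> v \<in> carrier_vec n \<Longrightarrow> ?E j *\<^sub>v v = components n Vs v ! j" for j v
    by (rule proj_along_mult_vec[OF d])
  have E_on: "j < length Vs \<Longrightarrow> l < length Vs \<Longrightarrow> v \<in> Vs ! l \<Longrightarrow>
      ?E j *\<^sub>v v = (if l = j then v else 0\<^sub>v n)" for j l v
    using proj_along_is_proj_along[OF d] unfolding is_proj_along_def by auto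
  have prod: "?E j * ?E l = (if j = l then ?E j else 0\<^sub>m n n)"
    if j: "j < length Vs" and l: "l < length Vs" for j l
  proof (rule mat_eq_by_mult_vec[of _ n])
    fix v :: "complex vec" assume v: "v \<in> carrier_vec n"
    have "(?E j * ?E l) *\<^sub>v v = ?E j *\<^sub>v (components n Vs v ! l)"
      using Ec[OF j] Ec[OF l] v Ev[OF l v] by simp
    also have "\<dots> = (if j = l then ?E j *\<^sub>v v else 0\<^sub>v n)"
      using E_on[OF j l] components(2)[OF d v] l Ev[OF j v] by auto
    finally show "(?E j * ?E l) *\<^sub>v v = (if j = l then ?E j else 0\<^sub>m n n) *\<^sub>v v" using v by simp
  qed (use Ec[OF j] Ec[OF l] in auto)
  have sum: "msum n (proj_map n Vs) = 1\<^sub>m n"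
  proof (rule mat_eq_by_mult_vec[of _ n])
    have sc: "set (proj_map n Vs) \<subseteq> carrier_mat n n" using Ec by (auto simp: proj_map_def)
    then show "msum n (proj_map n Vs) \<in> carrier_mat n n" by simp
    fix v :: "complex vec" assume v: "v \<in> carrier_vec n"
    have "map (\<lambda>E. E *\<^sub>v v) (proj_map n Vs) = components n Vs v"
      using components(1)[OF d v] Ev v by (intro nth_equalityI) auto
    then show "msum n (proj_map n Vs) *\<^sub>v v = 1\<^sub>m n *\<^sub>v v"
      using msum_mult_vec[OF sc v] components(3)[OF d v] v by simp
  qed simp
  show ?thesis unfolding resolution_of_identity_def
    using Ec prod sum by (auto simp: proj_map_def)
qed

lemma proj_along_nonzero:
  assumes d: "direct_sum_decomp n Vs" and j: "j < length Vs" and nz: "Vs ! j \<noteq> {0\<^sub>v n}"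
  shows "proj_along n Vs j \<noteq> 0\<^sub>m n n"
proof
  assume z: "proj_along n Vs j = 0\<^sub>m n n"
  have "0\<^sub>v n \<in> Vs ! j" using direct_sum_decomp_csubspace[OF d j] unfolding csubspace_def by auto
  with nz obtain v where v: "v \<in> Vs ! j" "v \<noteq> 0\<^sub>v n" by blast
  then have "proj_along n Vs j *\<^sub>v v = v"
    using proj_along_is_proj_along[OF d j] unfolding is_proj_along_def by auto
  then show False using z v direct_sum_decomp_carrier[OF d j] by auto
qed

lemma resolution_mult_fixed_space:
  assumes r: "resolution_of_identity n es" and j: "j < length es" and l: "l < length es"
    and v: "v \<in> fixed_space n (es ! l)"
  shows "es ! j *\<^sub>v v = (if j = l then v else 0\<^sub>v n)"
proof -
  have ec: "es ! j \<in> carrier_mat n n" "es ! l \<in> carrier_mat n n"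
    using r j l unfolding resolution_of_identity_def by auto
  have "es ! j *\<^sub>v v = (es ! j * es ! l) *\<^sub>v v"
    using v ec unfolding fixed_space_def by auto
  then show ?thesis using r j l v unfolding resolution_of_identity_def fixed_space_def by auto
qed

lemma mult_vec_in_fixed_space:
  assumes r: "resolution_of_identity n es" and j: "j < length es" and v: "v \<in> carrier_vec n"
  shows "es ! j *\<^sub>v v \<in> fixed_space n (es ! j)"
proof -
  have ec: "es ! j \<in> carrier_mat n n" using r j unfolding resolution_of_identity_def by auto
  then have "es ! j *\<^sub>v (es ! j *\<^sub>v v) = (es ! j * es ! j) *\<^sub>v v" using v by simp
  then show ?thesis using r j ec v unfolding resolution_of_identity_def fixed_space_def by auto
qed

lemma direct_sum_decomp_fixed_spaces:
  assumes r: "resolution_of_identity n es"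
  shows "direct_sum_decomp n (map (fixed_space n) es)"
  unfolding direct_sum_decomp_def
proof (intro conjI ballI allI impI)
  have ec: "set es \<subseteq> carrier_mat n n" using r unfolding resolution_of_identity_def by auto
  fix j assume "j < length (map (fixed_space n) es)"
  then have "es ! j \<in> carrier_mat n n" using ec by auto
  then show "csubspace n (map (fixed_space n) es ! j)"
    using \<open>j < _\<close> csubspace_fixed_space by simp
next
  have ec: "set es \<subseteq> carrier_mat n n" using r unfolding resolution_of_identity_def by auto
  fix v :: "complex vec" assume v: "v \<in> carrier_vec n"
  let ?W = "map (\<lambda>E. E *\<^sub>v v) es"
  show "\<exists>!ws. length ws = length (map (fixed_space n) es) \<and>
      (\<forall>j<length (map (fixed_space n) es). ws ! j \<in> map (fixed_space n) es ! j) \<and> vsum n ws = v"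
  proof (rule ex1I[of _ ?W])
    show "length ?W = length (map (fixed_space n) es) \<and>
        (\<forall>j<length (map (fixed_space n) es). ?W ! j \<in> map (fixed_space n) es ! j) \<and> vsum n ?W = v"
      using mult_vec_in_fixed_space[OF r _ v] msum_mult_vec[OF ec v] r v
      unfolding resolution_of_identity_def by auto
    fix ws assume ws: "length ws = length (map (fixed_space n) es) \<and>
        (\<forall>j<length (map (fixed_space n) es). ws ! j \<in> map (fixed_space n) es ! j) \<and> vsum n ws = v"
    have wc: "set ws \<subseteq> carrier_vec n"
      using ws unfolding fixed_space_def by (auto simp: in_set_conv_nth)
    show "ws = ?W"
    proof (rule nth_equalityI)
      show "length ws = length ?W" using ws by simp
      fix j assume "j < length ws"
      with ws have j: "j < length es" by simp
      have ej: "es ! j \<in> carrier_mat n n" using ec j by auto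
      have "es ! j *\<^sub>v v = vsum n (map ((*\<^sub>v) (es ! j)) ws)"
        using ws mult_mat_vec_vsum[OF ej wc] by auto
      also have "\<dots> = map ((*\<^sub>v) (es ! j)) ws ! j"
        by (rule vsum_single)
          (use ws wc ej j resolution_mult_fixed_space[OF r j] in \<open>auto simp: mult_mat_vec_carrier\<close>)
      also have "\<dots> = ws ! j" using ws j resolution_mult_fixed_space[OF r j j] by simp
      finally show "ws ! j = ?W ! j" using j by simp
    qed
  qed
qed

lemma proj_map_fixed_spaces:
  assumes r: "resolution_of_identity n es"
  shows "proj_map n (map (fixed_space n) es) = es"
proof (rule nth_equalityI)
  fix j assume "j < length (proj_map n (map (fixed_space n) es))"
  then have j: "j < length es" by simp
  have "is_proj_along n (map (fixed_space n) es) j (es ! j)"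
    using r j resolution_mult_fixed_space[OF r j] unfolding is_proj_along_def resolution_of_identity_def
    by auto
  then show "proj_map n (map (fixed_space n) es) ! j = es ! j"
    using proj_along_eqI[OF direct_sum_decomp_fixed_spaces[OF r]] j by simp
qed simp

section \<open>Block decompositions versus idempotents of the center\<close>

lemma cadj_mult_proj_along:
  assumes d: "direct_sum_decomp n Vs" and j: "j < length Vs"
    and B: "B \<in> carrier_mat n n" "cadj B = B"
    and orth: "\<forall>j<length Vs. \<forall>l<length Vs. j \<noteq> l \<longrightarrow>
      (\<forall>x\<in>Vs ! j. \<forall>y\<in>Vs ! l. hinner x (B *\<^sub>v y) = 0)"
  shows "cadj (B * proj_along n Vs j) = B * proj_along n Vs j"
proof -
  let ?E = "proj_along n Vs j"
  have E: "?E \<in> carrier_mat n n" by (rule proj_along_carrier[OF d j])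
  have "hinner ((B * ?E) *\<^sub>v x) y = hinner x ((B * ?E) *\<^sub>v y)"
    if x: "x \<in> carrier_vec n" and y: "y \<in> carrier_vec n" for x y
  proof -
    let ?cx = "components n Vs x" and ?cy = "components n Vs y"
    note cx = components[OF d x] and cy = components[OF d y]
    have cxc: "set ?cx \<subseteq> carrier_vec n" and cyc: "set ?cy \<subseteq> carrier_vec n"
      using components_carrier[OF d] x y by auto
    have cxj: "?cx ! j \<in> carrier_vec n" and cyj: "?cy ! j \<in> carrier_vec n"
      using cxc cyc cx(1) cy(1) j by (metis nth_mem subsetD)+
    txt \<open>Both sides reduce to the \<open>B\<close>-pairing of the \<open>j\<close>-th components, because the
      cross terms vanish.\<close>
    have "hinner x ((B * ?E) *\<^sub>v y) = hinner (vsum n ?cx) (B *\<^sub>v (?cy ! j))"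
      using cx(3) B E y proj_along_mult_vec[OF d j y] by simp
    also have "\<dots> = (\<Sum>w\<leftarrow>?cx. hinner w (B *\<^sub>v (?cy ! j)))"
      by (rule hinner_vsum_left[OF cxc]) (use B cyj in simp)
    also have "\<dots> = hinner (?cx ! j) (B *\<^sub>v (?cy ! j))"
      by (rule sum_list_map_single) (use cx cy j orth in auto)
    finally have rhs: "hinner x ((B * ?E) *\<^sub>v y) = hinner (?cx ! j) (B *\<^sub>v (?cy ! j))" .
    have "hinner ((B * ?E) *\<^sub>v x) y = hinner (B *\<^sub>v (?cx ! j)) y"
      using B E x proj_along_mult_vec[OF d j x] by simp
    also have "\<dots> = hinner (?cx ! j) (B *\<^sub>v vsum n ?cy)"
      using hinner_adjoint[OF B(1) cxj y] B(2) cy(3) by simp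
    also have "\<dots> = (\<Sum>w\<leftarrow>map ((*\<^sub>v) B) ?cy. hinner (?cx ! j) w)"
      unfolding mult_mat_vec_vsum[OF B(1) cyc] by (rule hinner_vsum_right) (use cyc B cxj in auto)
    also have "\<dots> = (\<Sum>w\<leftarrow>?cy. hinner (?cx ! j) (B *\<^sub>v w))" by (simp add: o_def)
    also have "\<dots> = hinner (?cx ! j) (B *\<^sub>v (?cy ! j))"
      by (rule sum_list_map_single) (use cx cy j orth in auto)
    finally show ?thesis using rhs by simp
  qed
  then show ?thesis using cadj_eq_iff_hinner[of "B * ?E" n] B E by simp
qed

lemma hinner_fixed_spaces_eq_0:
  assumes B: "B \<in> carrier_mat n n" "cadj B = B"
    and E: "E \<in> carrier_mat n n" "F \<in> carrier_mat n n"
    and BE: "cadj (B * E) = B * E" and EF: "E * F = 0\<^sub>m n n"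
    and x: "x \<in> fixed_space n E" and y: "y \<in> fixed_space n F"
  shows "hinner x (B *\<^sub>v y) = 0"
proof -
  have xc: "x \<in> carrier_vec n" and yc: "y \<in> carrier_vec n" and Ex: "E *\<^sub>v x = x" and Fy: "F *\<^sub>v y = y"
    using x y unfolding fixed_space_def by auto
  have "hinner x (B *\<^sub>v y) = hinner (E *\<^sub>v x) (B *\<^sub>v (F *\<^sub>v y))" using Ex Fy by simp
  also have "\<dots> = hinner x (cadj E *\<^sub>v (B *\<^sub>v (F *\<^sub>v y)))"
    using hinner_adjoint[OF E(1) xc, of "B *\<^sub>v (F *\<^sub>v y)"] B E yc by simp
  also have "cadj E *\<^sub>v (B *\<^sub>v (F *\<^sub>v y)) = (cadj E * B) *\<^sub>v (F *\<^sub>v y)"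
    using assoc_mult_mat_vec[of "cadj E" n n B n "F *\<^sub>v y"] B E yc by simp
  also have "cadj E * B = cadj (B * E)" using cadj_mult[OF B(1) E(1)] B(2) by simp
  also have "\<dots> = B * E" by (rule BE)
  also have "(B * E) *\<^sub>v (F *\<^sub>v y) = ((B * E) * F) *\<^sub>v y"
    by (rule assoc_mult_mat_vec[symmetric]) (use B E yc in auto)
  also have "(B * E) * F = 0\<^sub>m n n" using B E EF by simp
  finally show ?thesis using xc yc by simp
qed

lemma orth_idempotents_proj_map:
  assumes h: "\<forall>A \<in> set As. hermitian_mat n A" and s: "star_block_decomp n As t Vs"
  shows "orth_idempotents n As t (proj_map n Vs)"
proof -
  have len: "length Vs = t" and d: "direct_sum_decomp n Vs" and nz: "\<forall>j<t. Vs ! j \<noteq> {0\<^sub>v n}"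
    and orth: "\<forall>A \<in> set As. \<forall>j<t. \<forall>l<t. j \<noteq> l \<longrightarrow> (\<forall>x \<in> Vs ! j. \<forall>y \<in> Vs ! l. hform A x y = 0)"
    using s unfolding star_block_decomp_def by auto
  have "proj_along n Vs j \<in> center n As" if j: "j < t" for j
    unfolding center_def
  proof (intro CollectI conjI ballI)
    show "proj_along n Vs j \<in> carrier_mat n n" using proj_along_carrier[OF d] j len by simp
    fix A assume A: "A \<in> set As"
    then have "A \<in> carrier_mat n n" "cadj A = A" using h unfolding hermitian_mat_def by auto
    then show "cadj (A * proj_along n Vs j) = A * proj_along n Vs j"
      using cadj_mult_proj_along[OF d _ _ _] orth A j len unfolding hform_eq_hinner by auto
  qed
  then show ?thesis
    unfolding orth_idempotents_iff
    using resolution_of_identity_proj_map[OF d] proj_along_nonzero[OF d] nz len by auto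
qed

lemma star_block_decomp_fixed_spaces:
  assumes h: "\<forall>A \<in> set As. hermitian_mat n A" and oi: "orth_idempotents n As t es"
  shows "star_block_decomp n As t (map (fixed_space n) es)"
proof -
  have len: "length es = t" and r: "resolution_of_identity n es"
    and cen: "\<forall>j<t. es ! j \<in> center n As \<and> es ! j \<noteq> 0\<^sub>m n n"
    using oi unfolding orth_idempotents_iff by auto
  have ec: "j < t \<Longrightarrow> es ! j \<in> carrier_mat n n" for j
    using r len unfolding resolution_of_identity_def by auto
  have nonzero: "map (fixed_space n) es ! j \<noteq> {0\<^sub>v n}" if j: "j < t" for j
  proof -
    obtain v where v: "v \<in> carrier_vec n" "es ! j *\<^sub>v v \<noteq> 0\<^sub>v n"
      using mat_nonzero_mult_vec[OF ec[OF j]] cen j by blast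
    then show ?thesis using mult_vec_in_fixed_space[OF r _ v(1), of j] j len by auto
  qed
  have "hform A x y = 0"
    if A: "A \<in> set As" and jl: "j < t" "l < t" "j \<noteq> l"
      and x: "x \<in> map (fixed_space n) es ! j" and y: "y \<in> map (fixed_space n) es ! l" for A j l x y
  proof -
    have "A \<in> carrier_mat n n" "cadj A = A" using h A unfolding hermitian_mat_def by auto
    moreover have "cadj (A * es ! j) = A * es ! j" using cen jl A unfolding center_def by auto
    moreover have "es ! j * es ! l = 0\<^sub>m n n" using r jl len unfolding resolution_of_identity_def by auto
    ultimately show ?thesis
      unfolding hform_eq_hinner
      by (intro hinner_fixed_spaces_eq_0[of A n "es ! j" "es ! l"]) (use ec jl x y len in auto)
  qed
  then show ?thesis
    unfolding star_block_decomp_def using direct_sum_decomp_fixed_spaces[OF r] nonzero len by auto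
qed

lemma bij_betw_proj_map:
  assumes h: "\<forall>A \<in> set As. hermitian_mat n A"
  shows "bij_betw (proj_map n) {Vs. star_block_decomp n As t Vs} {es. orth_idempotents n As t es}"
proof (rule bij_betw_byWitness[where f' = "map (fixed_space n)"])
  show "\<forall>Vs\<in>{Vs. star_block_decomp n As t Vs}. map (fixed_space n) (proj_map n Vs) = Vs"
    using fixed_space_proj_along unfolding star_block_decomp_def
    by (auto intro!: nth_equalityI)
  show "\<forall>es\<in>{es. orth_idempotents n As t es}. proj_map n (map (fixed_space n) es) = es"
    using proj_map_fixed_spaces unfolding orth_idempotents_iff by auto
  show "proj_map n ` {Vs. star_block_decomp n As t Vs} \<subseteq> {es. orth_idempotents n As t es}"
    using orth_idempotents_proj_map[OF h] by auto
  show "map (fixed_space n) ` {es. orth_idempotents n As t es} \<subseteq> {Vs. star_block_decomp n As t Vs}"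
    using star_block_decomp_fixed_spaces[OF h] by auto
qed

lemma pairwise_orth_iff_hermitian_proj_map:
  assumes h: "\<forall>A \<in> set As. hermitian_mat n A" and s: "star_block_decomp n As t Vs"
  shows "pairwise_orth Vs \<longleftrightarrow> (\<forall>j<t. hermitian_mat n (proj_map n Vs ! j))"
proof -
  have len: "length Vs = t" and d: "direct_sum_decomp n Vs" using s unfolding star_block_decomp_def by auto
  have r: "resolution_of_identity n (proj_map n Vs)" by (rule resolution_of_identity_proj_map[OF d])
  have Ec: "j < t \<Longrightarrow> proj_along n Vs j \<in> carrier_mat n n" for j
    using proj_along_carrier[OF d] len by simp
  have I: "1\<^sub>m n \<in> carrier_mat n n" "cadj (1\<^sub>m n) = 1\<^sub>m n" by auto
  have in_carrier: "j < t \<Longrightarrow> y \<in> Vs ! j \<Longrightarrow> y \<in> carrier_vec n" for j y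
    using direct_sum_decomp_carrier[OF d] len by auto
  txt \<open>Both directions are the case \<open>B = 1\<^sub>m n\<close> of the two previous lemmas.\<close>
  show ?thesis
  proof
    assume "pairwise_orth Vs"
    then have "\<forall>j<length Vs. \<forall>l<length Vs. j \<noteq> l \<longrightarrow>
        (\<forall>x\<in>Vs ! j. \<forall>y\<in>Vs ! l. hinner x (1\<^sub>m n *\<^sub>v y) = 0)"
      using in_carrier len unfolding pairwise_orth_def by auto
    then have "cadj (1\<^sub>m n * proj_along n Vs j) = 1\<^sub>m n * proj_along n Vs j" if "j < t" for j
      using cadj_mult_proj_along[OF d _ I] that len by auto
    then show "\<forall>j<t. hermitian_mat n (proj_map n Vs ! j)"
      using Ec len left_mult_one_mat[OF Ec] unfolding hermitian_mat_def by auto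
  next
    assume he: "\<forall>j<t. hermitian_mat n (proj_map n Vs ! j)"
    show "pairwise_orth Vs"
      unfolding pairwise_orth_def
    proof (intro allI impI ballI)
      fix j l x y assume jl: "j < length Vs" "l < length Vs" "j \<noteq> l" and x: "x \<in> Vs ! j" and y: "y \<in> Vs ! l"
      have "cadj (1\<^sub>m n * proj_along n Vs j) = 1\<^sub>m n * proj_along n Vs j"
        using he jl len left_mult_one_mat[OF Ec] unfolding hermitian_mat_def by auto
      moreover have "proj_along n Vs j * proj_along n Vs l = 0\<^sub>m n n"
        using r jl unfolding resolution_of_identity_def by auto
      ultimately have "hinner x (1\<^sub>m n *\<^sub>v y) = 0"
        using hinner_fixed_spaces_eq_0[OF I Ec Ec] fixed_space_proj_along[OF d] x y jl len by auto
      then show "hinner x y = 0" using in_carrier y jl len by auto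
    qed
  qed
qed

lemma bij_betw_Collect_conj:
  assumes "bij_betw f {x. S x} {y. T y}" "\<And>x. S x \<Longrightarrow> P x \<longleftrightarrow> Q (f x)"
  shows "bij_betw f {x. S x \<and> P x} {y. T y \<and> Q y}"
proof -
  have "{x. S x \<and> P x} = {x. S x} \<inter> f -` {y. Q y}" using assms(2) by auto
  moreover have "{y. T y \<and> Q y} = {y. T y} \<inter> {y. Q y}" by auto
  ultimately show ?thesis
    using bij_betw_subset[OF assms(1)] assms unfolding bij_betw_def by (auto simp: inj_on_def)
qed

lemma bij_betw_proj_map_pairwise_orth:
  assumes h: "\<forall>A \<in> set As. hermitian_mat n A"
  shows "bij_betw (proj_map n) {Vs. star_block_decomp n As t Vs \<and> pairwise_orth Vs}
    {es. orth_idempotents n As t es \<and> (\<forall>j<t. hermitian_mat n (es ! j))}"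
  by (rule bij_betw_Collect_conj[OF bij_betw_proj_map[OF h]])
    (rule pairwise_orth_iff_hermitian_proj_map[OF h])

section \<open>Block diagonal congruences give idempotents\<close>

lemma in_block_Cons_0: "in_block (a # ns) 0 i \<longleftrightarrow> i < a"
  unfolding in_block_def by simp

lemma in_block_Cons_Suc: "in_block (a # ns) (Suc j) i \<longleftrightarrow> a \<le> i \<and> in_block ns j (i - a)"
  unfolding in_block_def by auto

lemma in_block_exists: "i < sum_list ns \<Longrightarrow> \<exists>j<length ns. in_block ns j i"
proof (induct ns arbitrary: i)
  case (Cons a ns)
  show ?case
  proof (cases "i < a")
    case True
    then show ?thesis using in_block_Cons_0 by (metis length_Cons zero_less_Suc)
  next
    case False
    then have "i - a < sum_list ns" using Cons(2) by simp
    then obtain j where "j < length ns" "in_block ns j (i - a)" using Cons(1) by blast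
    then show ?thesis using False in_block_Cons_Suc by (metis Suc_less_eq length_Cons not_less)
  qed
qed simp

lemma sum_list_take_mono: "a \<le> b \<Longrightarrow> sum_list (take a (ns :: nat list)) \<le> sum_list (take b ns)"
  by (metis le_Suc_ex le_add1 sum_list_append take_add)

lemma in_block_unique: "in_block ns j i \<Longrightarrow> in_block ns j' i \<Longrightarrow> j = j'"
  unfolding in_block_def
  by (metis Suc_leI le_less_trans less_le_not_le linorder_neqE_nat sum_list_take_mono)

lemma in_block_first:
  assumes bs: "block_sizes n t ns" and j: "j < t"
  shows "in_block ns j (sum_list (take j ns))" "sum_list (take j ns) < n"
proof -
  have len: "length ns = t" and pos: "ns ! j > 0" and sum: "sum_list ns = n"
    using bs j unfolding block_sizes_def by auto
  have next_block: "sum_list (take (Suc j) ns) = sum_list (take j ns) + ns ! j"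
    using j len by (simp add: take_Suc_conv_app_nth)
  then show "in_block ns j (sum_list (take j ns))" using pos unfolding in_block_def by simp
  have "sum_list (take (Suc j) ns) \<le> sum_list (take t ns)" using j by (intro sum_list_take_mono) simp
  then show "sum_list (take j ns) < n" using next_block pos len sum by simp
qed

definition block_proj :: "nat \<Rightarrow> nat list \<Rightarrow> nat \<Rightarrow> complex mat" where
  "block_proj n ns j = mat_diag n (\<lambda>i. if in_block ns j i then 1 else 0)"

lemma block_proj_carrier[simp]: "block_proj n ns j \<in> carrier_mat n n"
  unfolding block_proj_def by simp

lemma cadj_block_proj: "cadj (block_proj n ns j) = block_proj n ns j"
  unfolding block_proj_def by (rule eq_matI) (auto simp: mat_diag_def)

lemma block_proj_nonzero:
  assumes "block_sizes n t ns" "j < t"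
  shows "block_proj n ns j \<noteq> 0\<^sub>m n n"
proof
  let ?i = "sum_list (take j ns)"
  assume "block_proj n ns j = 0\<^sub>m n n"
  then have "block_proj n ns j $$ (?i, ?i) = 0" using in_block_first[OF assms] by simp
  then show False using in_block_first[OF assms] unfolding block_proj_def mat_diag_def by simp
qed

lemma msum_mat_diag:
  "msum n (map (\<lambda>j. mat_diag n (f j)) xs) = mat_diag n (\<lambda>i. \<Sum>j\<leftarrow>xs. f j i)"
proof (induct xs)
  case Nil
  then show ?case by (rule eq_matI) (auto simp: mat_diag_def)
next
  case (Cons a xs)
  then show ?case by simp (rule eq_matI; auto simp: mat_diag_def)
qed

lemma resolution_of_identity_block_projs:
  assumes bs: "block_sizes n t ns"
  shows "resolution_of_identity n (map (block_proj n ns) [0..<t])"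
proof -
  have len: "length ns = t" and sum: "sum_list ns = n" using bs unfolding block_sizes_def by auto
  have "(\<Sum>j\<leftarrow>[0..<t]. if in_block ns j i then 1 else 0) = (1::complex)" if i: "i < n" for i
  proof -
    obtain j where j: "j < t" "in_block ns j i" using in_block_exists[of i ns] i sum len by auto
    have "(\<Sum>j\<leftarrow>[0..<t]. if in_block ns j i then 1 else (0::complex)) =
        (\<Sum>l<t. if l = j then 1 else 0)"
      unfolding sum_list_sum_nth atLeast0LessThan[symmetric]
      by (rule sum.cong) (use j in_block_unique in auto)
    then show ?thesis using j by simp
  qed
  then have "msum n (map (block_proj n ns) [0..<t]) = 1\<^sub>m n"
    unfolding block_proj_def msum_mat_diag[of n _ "[0..<t]", simplified]
    by (intro eq_matI) (auto simp: mat_diag_def)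
  moreover have "block_proj n ns j * block_proj n ns l = (if j = l then block_proj n ns j else 0\<^sub>m n n)"
    for j l
    unfolding block_proj_def mat_diag_diag
    by (rule eq_matI) (auto simp: mat_diag_def dest: in_block_unique)
  ultimately show ?thesis unfolding resolution_of_identity_def by auto
qed

lemma block_diag_commute_block_proj:
  assumes B: "block_diag n ns B"
  shows "B * block_proj n ns j = block_proj n ns j * B"
proof -
  have Bc: "B \<in> carrier_mat n n" using B unfolding block_diag_def by auto
  have "B $$ (i, k) * (if in_block ns j k then 1 else 0) = (if in_block ns j i then 1 else 0) * B $$ (i, k)"
    if ik: "i < n" "k < n" for i k
  proof (cases "B $$ (i, k) = 0")
    case False
    then obtain j' where "in_block ns j' i" "in_block ns j' k"
      using B ik unfolding block_diag_def by blast
    then have "in_block ns j i \<longleftrightarrow> in_block ns j k" using in_block_unique by metis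
    then show ?thesis by simp
  qed simp
  then show ?thesis
    unfolding block_proj_def mat_diag_mult_left[OF Bc] mat_diag_mult_right[OF Bc]
    by (intro eq_matI) auto
qed

lemma resolution_of_identity_similar:
  assumes P: "P \<in> carrier_mat n n" and Q: "Q \<in> carrier_mat n n"
    and PQ: "P * Q = 1\<^sub>m n" and QP: "Q * P = 1\<^sub>m n" and r: "resolution_of_identity n es"
  shows "resolution_of_identity n (map (\<lambda>E. P * E * Q) es)"
proof -
  have ec: "set es \<subseteq> carrier_mat n n" using r unfolding resolution_of_identity_def by auto
  have prod: "(P * E * Q) * (P * F * Q) = P * (E * F) * Q"
    if "E \<in> carrier_mat n n" "F \<in> carrier_mat n n" for E F
  proof -
    have "(P * E * Q) * (P * F * Q) = P * E * (Q * P) * F * Q"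
      using P Q that by (simp add: assoc_mult_mat[of _ n n _ n _ n])
    then show ?thesis using P Q QP that by (simp add: assoc_mult_mat[of _ n n _ n _ n])
  qed
  have "msum n (map (\<lambda>E. P * E * Q) xs) = P * msum n xs * Q" if "set xs \<subseteq> carrier_mat n n" for xs
    using that
  proof (induct xs)
    case (Cons E xs)
    then have S: "msum n xs \<in> carrier_mat n n" and E: "E \<in> carrier_mat n n" by auto
    have "P * (E + msum n xs) * Q = (P * E + P * msum n xs) * Q"
      using mult_add_distrib_mat[OF P E S] by simp
    also have "\<dots> = P * E * Q + P * msum n xs * Q"
      by (rule add_mult_distrib_mat[OF _ _ Q]) (use P E S in auto)
    finally show ?case using Cons by simp
  qed (use P Q in simp)
  then have "msum n (map (\<lambda>E. P * E * Q) es) = 1\<^sub>m n"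
    using ec P Q PQ r unfolding resolution_of_identity_def by simp
  moreover have "(P * es ! j * Q) * (P * es ! l * Q) = P * (if j = l then es ! j else 0\<^sub>m n n) * Q"
    if "j < length es" "l < length es" for j l
  proof -
    have "es ! j \<in> carrier_mat n n" "es ! l \<in> carrier_mat n n" using ec that by auto
    then show ?thesis using prod[of "es ! j" "es ! l"] r that unfolding resolution_of_identity_def
      by (auto simp del: assoc_mult_mat)
  qed
  ultimately show ?thesis
    using ec P Q unfolding resolution_of_identity_def by (auto simp del: assoc_mult_mat)
qed

lemma cadj_similar_block_proj:
  assumes A: "hermitian_mat n A"
    and P: "P \<in> carrier_mat n n" and Q: "Q \<in> carrier_mat n n"
    and PQ: "P * Q = 1\<^sub>m n" and QP: "Q * P = 1\<^sub>m n"
    and bd: "block_diag n ns (cadj P * A * P)"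
  shows "cadj (A * (P * block_proj n ns j * Q)) = A * (P * block_proj n ns j * Q)"
proof -
  define B where "B = cadj P * A * P"
  let ?D = "block_proj n ns j"
  have Ac: "A \<in> carrier_mat n n" and Ah: "cadj A = A" using A unfolding hermitian_mat_def by auto
  have Bc: "B \<in> carrier_mat n n" using P Ac unfolding B_def by (meson cadj_carrier mult_carrier_mat)
  have "cadj B = cadj P * cadj (cadj P * A)"
    unfolding B_def by (rule cadj_mult) (use P Ac in auto)
  also have "cadj (cadj P * A) = A * P" using cadj_mult[of "cadj P" n n A n] P Ac Ah by simp
  finally have Bh: "cadj B = B" using P Ac unfolding B_def by (simp add: assoc_mult_mat[of _ n n _ n _ n])
  have "cadj (B * ?D) = cadj ?D * cadj B" by (rule cadj_mult[OF Bc block_proj_carrier])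
  also have "\<dots> = ?D * B" using Bh cadj_block_proj by simp
  also have "\<dots> = B * ?D" using block_diag_commute_block_proj bd unfolding B_def by simp
  finally have BD: "cadj (B * ?D) = B * ?D" .
  have QQ: "cadj Q * cadj P = 1\<^sub>m n" using cadj_mult[OF P Q] PQ by simp
  have "cadj Q * B * Q = (cadj Q * cadj P) * A * (P * Q)"
    using P Q Ac unfolding B_def by (simp add: assoc_mult_mat[of _ n n _ n _ n])
  then have A_eq: "A = cadj Q * B * Q" using QQ PQ Ac by simp
  have QPX: "Q * (P * X) = X" if "X \<in> carrier_mat n n" for X
    using QP P Q that by (simp flip: assoc_mult_mat[of Q n n P n X n])
  have "A * (P * ?D * Q) = cadj Q * (B * ?D) * Q"
    unfolding A_eq using P Q Bc by (simp add: assoc_mult_mat[of _ n n _ n _ n] QPX)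
  moreover have "cadj (cadj Q * (B * ?D) * Q) = cadj Q * (B * ?D) * Q"
    using cadj_mult[of "cadj Q * (B * ?D)" n n Q n] cadj_mult[of "cadj Q" n n "B * ?D" n] Bc Q BD
    by (simp add: assoc_mult_mat[of _ n n _ n _ n])
  ultimately show ?thesis by simp
qed

lemma orth_idempotents_similar_block_projs:
  assumes h: "\<forall>A \<in> set As. hermitian_mat n A"
    and P: "P \<in> carrier_mat n n" and Q: "Q \<in> carrier_mat n n"
    and PQ: "P * Q = 1\<^sub>m n" and QP: "Q * P = 1\<^sub>m n"
    and bs: "block_sizes n t ns" and bd: "\<forall>A \<in> set As. block_diag n ns (cadj P * A * P)"
  shows "orth_idempotents n As t (map (\<lambda>j. P * block_proj n ns j * Q) [0..<t])"
proof -
  have "P * block_proj n ns j * Q \<noteq> 0\<^sub>m n n" if "j < t" for j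
  proof
    assume "P * block_proj n ns j * Q = 0\<^sub>m n n"
    then have "Q * (P * block_proj n ns j * Q) * P = 0\<^sub>m n n" using P Q by simp
    moreover have "Q * (P * block_proj n ns j * Q) * P = (Q * P) * block_proj n ns j * (Q * P)"
      using P Q by (simp add: assoc_mult_mat[of _ n n _ n _ n])
    then have "Q * (P * block_proj n ns j * Q) * P = block_proj n ns j"
      using QP right_mult_one_mat[OF block_proj_carrier] left_mult_one_mat[OF block_proj_carrier] by simp
    ultimately show False using block_proj_nonzero[OF bs that] by simp
  qed
  moreover have "P * block_proj n ns j * Q \<in> center n As" for j
    using cadj_similar_block_proj[OF _ P Q PQ QP] h bd P Q unfolding center_def by auto
  moreover have "resolution_of_identity n (map (\<lambda>j. P * block_proj n ns j * Q) [0..<t])"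
    using resolution_of_identity_similar[OF P Q PQ QP resolution_of_identity_block_projs[OF bs]]
    by (simp add: o_def)
  ultimately show ?thesis unfolding orth_idempotents_iff by auto
qed

lemma hermitian_unitary_similar_block_proj:
  assumes "unitary_mat n U"
  shows "hermitian_mat n (U * block_proj n ns j * cadj U)"
proof -
  let ?D = "block_proj n ns j"
  have U: "U \<in> carrier_mat n n" using assms unfolding unitary_mat_def by simp
  have "cadj (U * ?D * cadj U) = cadj (cadj U) * cadj (U * ?D)"
    by (rule cadj_mult[of _ n n _ n]) (use U in auto)
  also have "cadj (U * ?D) = ?D * cadj U" using cadj_mult[OF U block_proj_carrier] cadj_block_proj by simp
  finally have "cadj (U * ?D * cadj U) = U * ?D * cadj U"
    using U by (simp add: assoc_mult_mat[of _ n n _ n _ n])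
  then show ?thesis unfolding hermitian_mat_def using U by simp
qed

section \<open>Orthonormal bases\<close>

fun lin_span :: "nat \<Rightarrow> complex vec list \<Rightarrow> complex vec set" where
  "lin_span n [] = {0\<^sub>v n}"
| "lin_span n (q # qs) = {c \<cdot>\<^sub>v q + x | c x. x \<in> lin_span n qs}"

lemma lin_span_carrier: "set qs \<subseteq> carrier_vec n \<Longrightarrow> lin_span n qs \<subseteq> carrier_vec n"
  by (induct qs) auto

lemma csubspace_lin_span:
  assumes "set qs \<subseteq> carrier_vec n"
  shows "csubspace n (lin_span n qs)"
  using assms
proof (induct qs)
  case Nil
  then show ?case unfolding csubspace_def by auto
next
  case (Cons q qs)
  then have q: "q \<in> carrier_vec n" and IH: "csubspace n (lin_span n qs)" by auto
  have sc: "lin_span n qs \<subseteq> carrier_vec n" using lin_span_carrier Cons(2) by auto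
  show ?case unfolding csubspace_def
  proof (intro conjI ballI allI)
    show "lin_span n (q # qs) \<subseteq> carrier_vec n" using q sc by auto
    have "0\<^sub>v n = 0 \<cdot>\<^sub>v q + 0\<^sub>v n" using q by (intro eq_vecI) auto
    then show "0\<^sub>v n \<in> lin_span n (q # qs)" using IH unfolding csubspace_def by auto
  next
    fix x y assume "x \<in> lin_span n (q # qs)" "y \<in> lin_span n (q # qs)"
    then obtain a b u v where x: "x = a \<cdot>\<^sub>v q + u" "u \<in> lin_span n qs"
      and y: "y = b \<cdot>\<^sub>v q + v" "v \<in> lin_span n qs" by auto
    have uc: "u \<in> carrier_vec n" "v \<in> carrier_vec n" using x y sc by auto
    have "x + y = (a + b) \<cdot>\<^sub>v q + (u + v)"
      using x y q uc by (intro eq_vecI) (auto simp: algebra_simps)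
    moreover have "u + v \<in> lin_span n qs" using IH x y unfolding csubspace_def by auto
    ultimately show "x + y \<in> lin_span n (q # qs)" by auto
  next
    fix c x assume "x \<in> lin_span n (q # qs)"
    then obtain a u where x: "x = a \<cdot>\<^sub>v q + u" "u \<in> lin_span n qs" by auto
    have uc: "u \<in> carrier_vec n" using x sc by auto
    have "c \<cdot>\<^sub>v x = (c * a) \<cdot>\<^sub>v q + c \<cdot>\<^sub>v u"
      using x q uc by (intro eq_vecI) (auto simp: algebra_simps)
    moreover have "c \<cdot>\<^sub>v u \<in> lin_span n qs" using IH x unfolding csubspace_def by auto
    ultimately show "c \<cdot>\<^sub>v x \<in> lin_span n (q # qs)" by auto
  qed
qed

lemma lin_span_superset: "set qs \<subseteq> carrier_vec n \<Longrightarrow> set qs \<subseteq> lin_span n qs"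
proof (induct qs)
  case (Cons q qs)
  then have q: "q \<in> carrier_vec n" and qs: "set qs \<subseteq> carrier_vec n" by auto
  have "0\<^sub>v n \<in> lin_span n qs" using csubspace_lin_span[OF qs] unfolding csubspace_def by auto
  moreover have "q = 1 \<cdot>\<^sub>v q + 0\<^sub>v n" using q by (intro eq_vecI) auto
  ultimately have "q \<in> lin_span n (q # qs)" by (simp only: lin_span.simps) blast
  moreover have "x \<in> lin_span n (q # qs)" if x: "x \<in> set qs" for x
  proof -
    have "x = 0 \<cdot>\<^sub>v q + x" using q x qs by (intro eq_vecI) auto
    moreover have "x \<in> lin_span n qs" using Cons(1) qs x by auto
    ultimately show ?thesis by (simp only: lin_span.simps) blast
  qed
  ultimately show ?case by auto
qed simp

lemma lin_span_least:
  assumes V: "csubspace n V" and qs: "set qs \<subseteq> V"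
  shows "lin_span n qs \<subseteq> V"
  using qs by (induct qs) (use V in \<open>auto simp: csubspace_def\<close>)

lemma lin_span_eqI:
  assumes "set qs \<subseteq> carrier_vec n" "set ws \<subseteq> carrier_vec n"
    and "set qs \<subseteq> lin_span n ws" "set ws \<subseteq> lin_span n qs"
  shows "lin_span n qs = lin_span n ws"
  using lin_span_least[OF csubspace_lin_span[OF assms(2)] assms(3)]
    lin_span_least[OF csubspace_lin_span[OF assms(1)] assms(4)] by auto

lemma lin_span_Cons_mono:
  assumes qs: "set qs \<subseteq> carrier_vec n" and w: "w \<in> carrier_vec n"
  shows "lin_span n qs \<subseteq> lin_span n (w # qs)"
proof
  fix x assume x: "x \<in> lin_span n qs"
  then have "x \<in> carrier_vec n" using lin_span_carrier[OF qs] by blast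
  then have "x = 0 \<cdot>\<^sub>v w + x" using w by (intro eq_vecI) auto
  with x show "x \<in> lin_span n (w # qs)" by auto
qed

lemma lin_span_Cons_add:
  assumes qs: "set qs \<subseteq> carrier_vec n" and w: "w \<in> carrier_vec n" and p: "p \<in> lin_span n qs"
  shows "lin_span n ((w + p) # qs) = lin_span n (w # qs)"
proof -
  have pc: "p \<in> carrier_vec n" using lin_span_carrier[OF qs] p by auto
  have wp: "w + p \<in> carrier_vec n" using w pc by simp
  have sub: "csubspace n (lin_span n (w # qs))" by (rule csubspace_lin_span) (use qs w in simp)
  have sub': "csubspace n (lin_span n ((w + p) # qs))" by (rule csubspace_lin_span) (use qs wp in simp)
  show ?thesis
  proof (rule lin_span_eqI)
    have "w \<in> lin_span n (w # qs)" using lin_span_superset[of "w # qs" n] qs w by simp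
    moreover have "p \<in> lin_span n (w # qs)" using p lin_span_Cons_mono[OF qs w] by blast
    ultimately have "w + p \<in> lin_span n (w # qs)" using sub unfolding csubspace_def by blast
    then show "set ((w + p) # qs) \<subseteq> lin_span n (w # qs)"
      using lin_span_superset[OF qs] lin_span_Cons_mono[OF qs w] by (simp only: set_simps) blast
    have "w + p \<in> lin_span n ((w + p) # qs)" using lin_span_superset[of "(w + p) # qs" n] qs wp by simp
    moreover have "p \<in> lin_span n ((w + p) # qs)" using p lin_span_Cons_mono[OF qs wp] by blast
    then have "(-1) \<cdot>\<^sub>v p \<in> lin_span n ((w + p) # qs)" using sub' unfolding csubspace_def by blast
    moreover have "w = (w + p) + (-1) \<cdot>\<^sub>v p" using w pc by (intro eq_vecI) auto
    ultimately have "w \<in> lin_span n ((w + p) # qs)" using sub' unfolding csubspace_def by metis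
    then show "set (w # qs) \<subseteq> lin_span n ((w + p) # qs)"
      using lin_span_superset[OF qs] lin_span_Cons_mono[OF qs wp] by (simp only: set_simps) blast
  qed (use qs w wp in auto)
qed

lemma lin_span_Cons_smult:
  assumes c: "c \<noteq> 0"
  shows "lin_span n ((c \<cdot>\<^sub>v w) # qs) = lin_span n (w # qs)"
proof -
  have "x \<in> lin_span n (w # qs)" if x: "x \<in> lin_span n ((c \<cdot>\<^sub>v w) # qs)" for x
  proof -
    obtain a y where "x = a \<cdot>\<^sub>v (c \<cdot>\<^sub>v w) + y" "y \<in> lin_span n qs"
      using x unfolding lin_span.simps by blast
    moreover have "a \<cdot>\<^sub>v (c \<cdot>\<^sub>v w) = (a * c) \<cdot>\<^sub>v w" by (rule eq_vecI) auto
    ultimately show ?thesis by auto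
  qed
  moreover have "x \<in> lin_span n ((c \<cdot>\<^sub>v w) # qs)" if x: "x \<in> lin_span n (w # qs)" for x
  proof -
    obtain a y where "x = a \<cdot>\<^sub>v w + y" "y \<in> lin_span n qs"
      using x unfolding lin_span.simps by blast
    moreover have "a \<cdot>\<^sub>v w = (a / c) \<cdot>\<^sub>v (c \<cdot>\<^sub>v w)" using c by (intro eq_vecI) auto
    ultimately show ?thesis by auto
  qed
  ultimately show ?thesis by blast
qed

lemma hinner_lin_span_eq_0:
  assumes qs: "set qs \<subseteq> carrier_vec n" and q: "q \<in> carrier_vec n"
    and orth: "\<forall>q'\<in>set qs. hinner q q' = 0" and x: "x \<in> lin_span n qs"
  shows "hinner q x = 0"
proof -
  have "csubspace n {x \<in> carrier_vec n. hinner q x = 0}"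
    unfolding csubspace_def using q by (auto simp: hinner_add_right hinner_smult_right)
  then have "lin_span n qs \<subseteq> {x \<in> carrier_vec n. hinner q x = 0}"
    by (rule lin_span_least) (use qs orth in auto)
  then show ?thesis using x by auto
qed

lemma hinner_normalize:
  assumes r: "r \<in> carrier_vec n" "r \<noteq> 0\<^sub>v n"
  obtains c where "c \<noteq> 0" "hinner (c \<cdot>\<^sub>v r) (c \<cdot>\<^sub>v r) = 1"
proof -
  have "hinner r r > 0" by (rule hinner_self_gt_0[OF r])
  then have pos: "Re (hinner r r) > 0" "Im (hinner r r) = 0" unfolding less_complex_def by auto
  define a where "a = Re (hinner r r)"
  have a: "a > 0" "hinner r r = complex_of_real a" using pos unfolding a_def by (auto simp: complex_eq_iff)
  define c where "c = complex_of_real (1 / sqrt a)"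
  have "hinner (c \<cdot>\<^sub>v r) (c \<cdot>\<^sub>v r) = cnj c * c * hinner r r"
    using r by (simp add: hinner_smult_left[of _ n] hinner_smult_right[of _ n])
  also have "\<dots> = complex_of_real (1 / sqrt a * (1 / sqrt a) * a)"
    unfolding a(2) c_def by (simp only: complex_cnj_complex_of_real of_real_mult)
  also have "1 / sqrt a * (1 / sqrt a) * a = 1" using a by (simp add: field_simps)
  finally have "hinner (c \<cdot>\<^sub>v r) (c \<cdot>\<^sub>v r) = 1" by simp
  moreover have "c \<noteq> 0" using a unfolding c_def by simp
  ultimately show ?thesis using that by blast
qed

fun orthonormal :: "complex vec list \<Rightarrow> bool" where
  "orthonormal [] = True"
| "orthonormal (q # qs) \<longleftrightarrow> hinner q q = 1 \<and> (\<forall>q' \<in> set qs. hinner q q' = 0) \<and> orthonormal qs"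

lemma orthonormal_norm: "orthonormal qs \<Longrightarrow> q \<in> set qs \<Longrightarrow> hinner q q = 1"
  by (induct qs) auto

definition fourier_sum :: "nat \<Rightarrow> complex vec list \<Rightarrow> complex vec \<Rightarrow> complex vec" where
  "fourier_sum n qs w = vsum n (map (\<lambda>q. hinner q w \<cdot>\<^sub>v q) qs)"

lemma fourier_sum_Cons: "fourier_sum n (q # qs) w = hinner q w \<cdot>\<^sub>v q + fourier_sum n qs w"
  unfolding fourier_sum_def by simp

lemma fourier_sum_carrier: "set qs \<subseteq> carrier_vec n \<Longrightarrow> fourier_sum n qs w \<in> carrier_vec n"
  unfolding fourier_sum_def by (rule vsum_carrier) auto

lemma fourier_sum_in_lin_span: "set qs \<subseteq> carrier_vec n \<Longrightarrow> fourier_sum n qs w \<in> lin_span n qs"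
  unfolding fourier_sum_def by (induct qs) auto

lemma hinner_fourier_sum:
  assumes qs: "set qs \<subseteq> carrier_vec n" and o: "orthonormal qs" and q': "q' \<in> set qs"
  shows "hinner q' (fourier_sum n qs w) = hinner q' w"
  using qs o q'
proof (induct qs)
  case (Cons q qs)
  then have q: "q \<in> carrier_vec n" and qsc: "set qs \<subseteq> carrier_vec n" and q'c: "q' \<in> carrier_vec n"
    and oq: "hinner q q = 1" "\<forall>q'\<in>set qs. hinner q q' = 0" "orthonormal qs" by auto
  have pc: "fourier_sum n qs w \<in> carrier_vec n" by (rule fourier_sum_carrier[OF qsc])
  have expand: "hinner q' (fourier_sum n (q # qs) w) = hinner q w * hinner q' q + hinner q' (fourier_sum n qs w)"
    unfolding fourier_sum_Cons using q q'c pc by (simp add: hinner_add_right[of _ n] hinner_smult_right[of _ n])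
  show ?case
  proof (cases "q' \<in> set qs")
    case True
    then have "hinner q' q = 0" using oq hinner_commute[OF q q'c] by simp
    then show ?thesis using expand Cons(1)[OF qsc oq(3) True] by simp
  next
    case False
    then have "q' = q" using Cons(4) by simp
    moreover have "hinner q (fourier_sum n qs w) = 0"
      by (rule hinner_lin_span_eq_0[OF qsc q oq(2) fourier_sum_in_lin_span[OF qsc]])
    ultimately show ?thesis using expand oq by simp
  qed
qed simp

lemma fourier_sum_eq:
  assumes qs: "set qs \<subseteq> carrier_vec n" and o: "orthonormal qs" and w: "w \<in> lin_span n qs"
  shows "fourier_sum n qs w = w"
  using qs o w
proof (induct qs arbitrary: w)
  case Nil
  then show ?case by (simp add: fourier_sum_def)
next
  case (Cons q qs)
  then have q: "q \<in> carrier_vec n" and qsc: "set qs \<subseteq> carrier_vec n"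
    and oq: "hinner q q = 1" "\<forall>q'\<in>set qs. hinner q q' = 0" "orthonormal qs" by auto
  obtain c x where w: "w = c \<cdot>\<^sub>v q + x" and x: "x \<in> lin_span n qs" using Cons(4) by auto
  have xc: "x \<in> carrier_vec n" using lin_span_carrier[OF qsc] x by auto
  have "hinner q x = 0" by (rule hinner_lin_span_eq_0[OF qsc q oq(2) x])
  then have "hinner q w = c" unfolding w using q xc oq by (simp add: hinner_add_right[of _ n] hinner_smult_right[of _ n])
  moreover have "hinner q' w = hinner q' x" if q': "q' \<in> set qs" for q'
  proof -
    have q'c: "q' \<in> carrier_vec n" using qsc q' by auto
    then have "hinner q' q = 0" using hinner_commute[OF q q'c] oq q' by simp
    then show ?thesis unfolding w using q xc q'c by (simp add: hinner_add_right[of _ n] hinner_smult_right[of _ n])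
  qed
  then have "fourier_sum n qs w = fourier_sum n qs x" unfolding fourier_sum_def by (metis (no_types, lifting) map_eq_conv)
  ultimately show ?case using Cons(1)[OF qsc oq(3) x] unfolding fourier_sum_Cons w by simp
qed

text \<open>One Gram-Schmidt step: subtract from \<open>w\<close> its Fourier sum and normalise the rest, if nonzero.\<close>

lemma orthonormal_Cons_lin_span:
  assumes qs: "set qs \<subseteq> carrier_vec n" and o: "orthonormal qs" and w: "w \<in> carrier_vec n"
  obtains qs' where "set qs' \<subseteq> carrier_vec n" "orthonormal qs'" "lin_span n qs' = lin_span n (w # qs)"
proof -
  let ?p = "fourier_sum n qs w"
  define r where "r = w - ?p"
  have pc: "?p \<in> carrier_vec n" by (rule fourier_sum_carrier[OF qs])
  have rc: "r \<in> carrier_vec n" unfolding r_def using w pc by simp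
  have w_eq: "w = r + ?p" unfolding r_def using w pc by (intro eq_vecI) auto
  have span_r: "lin_span n (r # qs) = lin_span n (w # qs)"
    using lin_span_Cons_add[OF qs rc fourier_sum_in_lin_span[OF qs, of w]] unfolding w_eq[symmetric]
    by (rule sym)
  have r_orth: "hinner q' r = 0" if q': "q' \<in> set qs" for q'
  proof -
    have q'c: "q' \<in> carrier_vec n" using qs q' by auto
    have "hinner q' w = hinner q' r + hinner q' ?p" using hinner_add_right[OF q'c rc pc] w_eq by simp
    then show ?thesis using hinner_fourier_sum[OF qs o q'] by simp
  qed
  show ?thesis
  proof (cases "r = 0\<^sub>v n")
    case True
    have "lin_span n (r # qs) = lin_span n qs"
    proof (rule lin_span_eqI)
      show "set (r # qs) \<subseteq> lin_span n qs"
        using True lin_span_superset[OF qs] csubspace_lin_span[OF qs] unfolding csubspace_def by auto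
    qed (use qs rc lin_span_superset[of "r # qs" n] in auto)
    then show ?thesis using that qs o span_r by simp
  next
    case False
    then obtain c where c: "c \<noteq> 0" "hinner (c \<cdot>\<^sub>v r) (c \<cdot>\<^sub>v r) = 1"
      using hinner_normalize[OF rc] by blast
    define q0 where "q0 = c \<cdot>\<^sub>v r"
    have q0c: "q0 \<in> carrier_vec n" unfolding q0_def using rc by simp
    have "hinner q0 q' = 0" if q': "q' \<in> set qs" for q'
      using r_orth[OF q'] hinner_commute[of q' n r] qs q' rc unfolding q0_def
      by (auto simp: hinner_smult_left[of _ n])
    then have "orthonormal (q0 # qs)" using o c unfolding q0_def by simp
    moreover have "lin_span n (q0 # qs) = lin_span n (r # qs)"
      unfolding q0_def using c by (intro lin_span_Cons_smult)
    moreover have "set (q0 # qs) \<subseteq> carrier_vec n" using q0c qs by simp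
    ultimately show ?thesis using that span_r by metis
  qed
qed

lemma orthonormal_basis_exists:
  assumes "set ws \<subseteq> carrier_vec n"
  obtains qs where "set qs \<subseteq> carrier_vec n" "orthonormal qs" "lin_span n qs = lin_span n ws"
  using assms
proof (induct ws arbitrary: thesis)
  case Nil
  then show ?case by (metis empty_subsetI lin_span.simps(1) list.set(1) orthonormal.simps(1))
next
  case (Cons w ws)
  from Cons.prems(2) have w: "w \<in> carrier_vec n" and ws: "set ws \<subseteq> carrier_vec n" by auto
  obtain qs where qs: "set qs \<subseteq> carrier_vec n" "orthonormal qs" "lin_span n qs = lin_span n ws"
    using Cons.hyps ws by blast
  obtain qs' where "set qs' \<subseteq> carrier_vec n" "orthonormal qs'" "lin_span n qs' = lin_span n (w # qs)"
    using orthonormal_Cons_lin_span[OF qs(1,2) w] by blast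
  then show ?case using Cons.prems(1) qs(3) by simp
qed

lemma lin_span_cols_idempotent:
  assumes E: "E \<in> carrier_mat n n" and idem: "E * E = E"
  shows "lin_span n (cols E) = fixed_space n E"
proof
  have cc: "set (cols E) \<subseteq> carrier_vec n" using E cols_dim by (metis carrier_matD(1))
  show "lin_span n (cols E) \<subseteq> fixed_space n E"
  proof (rule lin_span_least[OF csubspace_fixed_space[OF E]])
    show "set (cols E) \<subseteq> fixed_space n E"
    proof
      fix c assume "c \<in> set (cols E)"
      then obtain k where k: "k < n" "c = col E k" using E unfolding cols_def by auto
      have "E *\<^sub>v c = (E * E) *\<^sub>v unit_vec n k" using mult_unit_vec_eq_col[OF E k(1)] k E by simp
      then show "c \<in> fixed_space n E"
        unfolding fixed_space_def using idem mult_unit_vec_eq_col[OF E k(1)] k E by simp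
    qed
  qed
  show "fixed_space n E \<subseteq> lin_span n (cols E)"
  proof
    fix v assume "v \<in> fixed_space n E"
    then have v: "v \<in> carrier_vec n" "E *\<^sub>v v = v" unfolding fixed_space_def by auto
    have "v $ i \<cdot>\<^sub>v col E i \<in> lin_span n (cols E)" if "i < n" for i
    proof -
      have "col E i \<in> set (cols E)" using E that unfolding cols_def by auto
      then show ?thesis
        using lin_span_superset[OF cc] csubspace_lin_span[OF cc] unfolding csubspace_def by auto
    qed
    then have "set (map (\<lambda>i. v $ i \<cdot>\<^sub>v col E i) [0..<n]) \<subseteq> lin_span n (cols E)" by auto
    then have "vsum n (map (\<lambda>i. v $ i \<cdot>\<^sub>v col E i) [0..<n]) \<in> lin_span n (cols E)"
      by (rule csubspace_vsum[OF csubspace_lin_span[OF cc]])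
    then show "v \<in> lin_span n (cols E)" using mult_mat_vec_cols[OF E v(1)] v by simp
  qed
qed

section \<open>Idempotents give block diagonal congruences\<close>

definition orthonormal_bases :: "nat \<Rightarrow> complex mat list \<Rightarrow> complex vec list list \<Rightarrow> bool" where
  "orthonormal_bases n es Qs \<longleftrightarrow> length Qs = length es \<and>
     (\<forall>j<length es. set (Qs ! j) \<subseteq> carrier_vec n \<and> orthonormal (Qs ! j) \<and>
        lin_span n (Qs ! j) = fixed_space n (es ! j))"

lemma orthonormal_bases_exist:
  assumes r: "resolution_of_identity n es"
  obtains Qs where "orthonormal_bases n es Qs"
proof -
  let ?basis = "\<lambda>j qs. set qs \<subseteq> carrier_vec n \<and> orthonormal qs \<and> lin_span n qs = fixed_space n (es ! j)"
  have "\<exists>qs. ?basis j qs" if j: "j < length es" for j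
  proof -
    have E: "es ! j \<in> carrier_mat n n" "es ! j * es ! j = es ! j"
      using r j unfolding resolution_of_identity_def by auto
    then have "set (cols (es ! j)) \<subseteq> carrier_vec n" using cols_dim by (metis carrier_matD(1))
    then show ?thesis using orthonormal_basis_exists lin_span_cols_idempotent[OF E] by metis
  qed
  then have "?basis j (map (\<lambda>j. SOME qs. ?basis j qs) [0..<length es] ! j)" if j: "j < length es" for j
    using someI_ex[of "?basis j"] j by simp
  then show ?thesis using that[of "map (\<lambda>j. SOME qs. ?basis j qs) [0..<length es]"]
    unfolding orthonormal_bases_def by auto
qed

lemma orthonormal_bases_carrier:
  "orthonormal_bases n es Qs \<Longrightarrow> set (concat Qs) \<subseteq> carrier_vec n"
  unfolding orthonormal_bases_def by (auto simp: in_set_conv_nth) (metis nth_mem subsetD)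

lemma orthonormal_bases_in_fixed_space:
  assumes "orthonormal_bases n es Qs" "j < length es" "q \<in> set (Qs ! j)"
  shows "q \<in> fixed_space n (es ! j)"
  using assms lin_span_superset[of "Qs ! j" n] unfolding orthonormal_bases_def by auto

definition indexed_basis :: "complex vec list list \<Rightarrow> (complex vec \<times> nat) list" where
  "indexed_basis Qs = concat (map (\<lambda>j. map (\<lambda>q. (q, j)) (Qs ! j)) [0..<length Qs])"

lemma map_fst_indexed_basis: "map fst (indexed_basis Qs) = concat Qs"
proof -
  have "map fst (indexed_basis Qs) = concat (map (\<lambda>j. Qs ! j) [0..<length Qs])"
    unfolding indexed_basis_def by (simp add: map_concat o_def)
  also have "map (\<lambda>j. Qs ! j) [0..<length Qs] = Qs" by (rule map_nth)
  finally show ?thesis .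
qed

lemma length_indexed_basis[simp]: "length (indexed_basis Qs) = length (concat Qs)"
  using map_fst_indexed_basis[of Qs] by (metis length_map)

lemma mem_indexed_basis: "x \<in> set (indexed_basis Qs) \<Longrightarrow> snd x < length Qs \<and> fst x \<in> set (Qs ! snd x)"
  unfolding indexed_basis_def by auto

lemma nth_concat_in_block:
  "i < length (concat Qs) \<Longrightarrow> \<exists>j<length Qs. in_block (map length Qs) j i \<and> concat Qs ! i \<in> set (Qs ! j)"
proof (induct Qs arbitrary: i)
  case (Cons Q Qs)
  show ?case
  proof (cases "i < length Q")
    case True
    then show ?thesis by (intro exI[of _ 0]) (auto simp: in_block_Cons_0 nth_append)
  next
    case False
    then have "i - length Q < length (concat Qs)" using Cons.prems by simp
    then obtain j where "j < length Qs" "in_block (map length Qs) j (i - length Q)"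
      "concat Qs ! (i - length Q) \<in> set (Qs ! j)"
      using Cons.hyps by blast
    then show ?thesis using False by (intro exI[of _ "Suc j"]) (auto simp: in_block_Cons_Suc nth_append)
  qed
qed simp

lemma mat_of_cols_mult_mat_of_rows_mult_vec:
  assumes fg: "\<forall>x\<in>set xs. f x \<in> carrier_vec n \<and> g x \<in> carrier_vec n" and v: "v \<in> carrier_vec n"
  shows "(mat_of_cols n (map f xs) * mat_of_rows n (map g xs)) *\<^sub>v v = vsum n (map (\<lambda>x. (g x \<bullet> v) \<cdot>\<^sub>v f x) xs)"
proof -
  let ?P = "mat_of_cols n (map f xs)" and ?L = "mat_of_rows n (map g xs)" and ?k = "length xs"
  have P: "?P \<in> carrier_mat n ?k" and L: "?L \<in> carrier_mat ?k n" by auto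
  have "(?P * ?L) *\<^sub>v v = ?P *\<^sub>v (?L *\<^sub>v v)" using P L v by simp
  also have "\<dots> = vsum n (map (\<lambda>i. (?L *\<^sub>v v) $ i \<cdot>\<^sub>v col ?P i) [0..<?k])"
    by (rule mult_mat_vec_cols[OF P]) (use L v in simp)
  also have "map (\<lambda>i. (?L *\<^sub>v v) $ i \<cdot>\<^sub>v col ?P i) [0..<?k] = map (\<lambda>x. (g x \<bullet> v) \<cdot>\<^sub>v f x) xs"
    using fg by (intro nth_equalityI) auto
  finally show ?thesis .
qed

definition basis_mat :: "nat \<Rightarrow> complex vec list list \<Rightarrow> complex mat" where
  "basis_mat n Qs = mat_of_cols n (concat Qs)"

text \<open>The row dual to a basis vector \<open>q\<close> of block \<open>j\<close> is the functional \<open>v \<mapsto> q\<^sup>* e\<^sub>j v\<close>.\<close>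

definition dual_basis_mat :: "nat \<Rightarrow> complex mat list \<Rightarrow> complex vec list list \<Rightarrow> complex mat" where
  "dual_basis_mat n es Qs =
     mat_of_rows n (map (\<lambda>(q, j). map_vec cnj (cadj (es ! j) *\<^sub>v q)) (indexed_basis Qs))"

lemma basis_mat_carrier: "basis_mat n Qs \<in> carrier_mat n (length (concat Qs))"
  unfolding basis_mat_def by simp

lemma dual_basis_mat_carrier: "dual_basis_mat n es Qs \<in> carrier_mat (length (concat Qs)) n"
  unfolding dual_basis_mat_def
  using mat_of_rows_carrier(1)[of n "map (\<lambda>(q, j). map_vec cnj (cadj (es ! j) *\<^sub>v q)) (indexed_basis Qs)"]
  by simp

lemma dual_row_scalar_prod:
  assumes "E \<in> carrier_mat n n" "q \<in> carrier_vec n" "v \<in> carrier_vec n"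
  shows "map_vec cnj (cadj E *\<^sub>v q) \<bullet> v = hinner q (E *\<^sub>v v)"
  using hinner_adjoint[of "cadj E" n n q v] assms unfolding hinner_def by simp

lemma indexed_basis_carrier:
  assumes ec: "set es \<subseteq> carrier_mat n n" and Qs: "orthonormal_bases n es Qs"
    and x: "x \<in> set (indexed_basis Qs)"
  shows "fst x \<in> carrier_vec n" "map_vec cnj (cadj (es ! snd x) *\<^sub>v fst x) \<in> carrier_vec n"
proof -
  have j: "snd x < length es" and q: "fst x \<in> set (Qs ! snd x)"
    using mem_indexed_basis[OF x] Qs unfolding orthonormal_bases_def by auto
  have "es ! snd x \<in> carrier_mat n n" by (rule subsetD[OF ec nth_mem[OF j]])
  moreover show "fst x \<in> carrier_vec n"
    using Qs j q unfolding orthonormal_bases_def by auto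
  ultimately show "map_vec cnj (cadj (es ! snd x) *\<^sub>v fst x) \<in> carrier_vec n"
    using mult_mat_vec_carrier[OF cadj_carrier] by simp
qed

lemma basis_mat_mult_dual_basis_mat_mult_vec:
  assumes ec: "set es \<subseteq> carrier_mat n n" and Qs: "orthonormal_bases n es Qs" and v: "v \<in> carrier_vec n"
  shows "(basis_mat n Qs * dual_basis_mat n es Qs) *\<^sub>v v =
    vsum n (map (\<lambda>j. fourier_sum n (Qs ! j) (es ! j *\<^sub>v v)) [0..<length es])"
proof -
  have len: "length Qs = length es" and Qc: "j < length es \<Longrightarrow> set (Qs ! j) \<subseteq> carrier_vec n" for j
    using Qs unfolding orthonormal_bases_def by auto
  let ?row = "\<lambda>(q, j). map_vec cnj (cadj (es ! j) *\<^sub>v q)"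
  have row: "?row (q, j) \<bullet> v = hinner q (es ! j *\<^sub>v v)" if "j < length es" "q \<in> set (Qs ! j)" for q j
  proof -
    have "es ! j \<in> carrier_mat n n" by (rule subsetD[OF ec nth_mem[OF that(1)]])
    moreover have "q \<in> carrier_vec n" by (rule subsetD[OF Qc[OF that(1)] that(2)])
    ultimately show ?thesis unfolding prod.case by (rule dual_row_scalar_prod[OF _ _ v])
  qed
  have rows_carrier: "\<forall>x\<in>set (indexed_basis Qs). fst x \<in> carrier_vec n \<and> ?row x \<in> carrier_vec n"
  proof
    fix x assume x: "x \<in> set (indexed_basis Qs)"
    obtain q j where "x = (q, j)" by (cases x)
    then show "fst x \<in> carrier_vec n \<and> ?row x \<in> carrier_vec n"
      using indexed_basis_carrier[OF ec Qs x] by simp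
  qed
  have "(basis_mat n Qs * dual_basis_mat n es Qs) *\<^sub>v v =
      vsum n (map (\<lambda>x. (?row x \<bullet> v) \<cdot>\<^sub>v fst x) (indexed_basis Qs))"
    unfolding basis_mat_def dual_basis_mat_def map_fst_indexed_basis[symmetric]
    by (rule mat_of_cols_mult_mat_of_rows_mult_vec[OF rows_carrier v])
  also have "map (\<lambda>x. (?row x \<bullet> v) \<cdot>\<^sub>v fst x) (indexed_basis Qs) =
      concat (map (\<lambda>j. map (\<lambda>q. hinner q (es ! j *\<^sub>v v) \<cdot>\<^sub>v q) (Qs ! j)) [0..<length Qs])"
    unfolding indexed_basis_def map_concat map_map
    by (intro arg_cong[where f = concat] map_cong refl) (use row len in auto)
  also have "vsum n \<dots> = vsum n (map (\<lambda>j. fourier_sum n (Qs ! j) (es ! j *\<^sub>v v)) [0..<length es])"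
  proof -
    have "q \<in> carrier_vec n" if "j < length Qs" "q \<in> set (Qs ! j)" for j q
      using subsetD[OF Qc] that len by simp
    then show ?thesis unfolding fourier_sum_def using len by (subst vsum_concat) (auto simp: o_def)
  qed
  finally show ?thesis .
qed

lemma basis_mat_mult_dual_basis_mat:
  assumes r: "resolution_of_identity n es" and Qs: "orthonormal_bases n es Qs"
  shows "basis_mat n Qs * dual_basis_mat n es Qs = 1\<^sub>m n"
proof (rule mat_eq_by_mult_vec[of _ n])
  have Qc: "j < length es \<Longrightarrow> set (Qs ! j) \<subseteq> carrier_vec n"
    and Qo: "j < length es \<Longrightarrow> orthonormal (Qs ! j)"
    and Qspan: "j < length es \<Longrightarrow> lin_span n (Qs ! j) = fixed_space n (es ! j)" for j
    using Qs unfolding orthonormal_bases_def by auto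
  have ec: "set es \<subseteq> carrier_mat n n" and sum: "msum n es = 1\<^sub>m n"
    using r unfolding resolution_of_identity_def by auto
  show "basis_mat n Qs * dual_basis_mat n es Qs \<in> carrier_mat n n"
    using basis_mat_carrier dual_basis_mat_carrier by (rule mult_carrier_mat)
  fix v :: "complex vec" assume v: "v \<in> carrier_vec n"
  have "map (\<lambda>j. fourier_sum n (Qs ! j) (es ! j *\<^sub>v v)) [0..<length es] = map (\<lambda>j. es ! j *\<^sub>v v) [0..<length es]"
    by (rule map_cong[OF refl]) (use fourier_sum_eq[OF Qc Qo] Qspan mult_vec_in_fixed_space[OF r _ v] in auto)
  also have "\<dots> = map (\<lambda>E. E *\<^sub>v v) es" by (rule nth_equalityI) auto
  finally show "(basis_mat n Qs * dual_basis_mat n es Qs) *\<^sub>v v = 1\<^sub>m n *\<^sub>v v"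
    using basis_mat_mult_dual_basis_mat_mult_vec[OF ec Qs v] msum_mult_vec[OF ec v] sum v by simp
qed simp

lemma sum_diag_mult_comm:
  fixes L P :: "complex mat"
  assumes "L \<in> carrier_mat k n" "P \<in> carrier_mat n k"
  shows "(\<Sum>i<k. (L * P) $$ (i, i)) = (\<Sum>r<n. (P * L) $$ (r, r))"
proof -
  have "(\<Sum>i<k. (L * P) $$ (i, i)) = (\<Sum>i<k. \<Sum>r<n. L $$ (i, r) * P $$ (r, i))"
    using assms by (simp add: scalar_prod_def atLeast0LessThan)
  also have "\<dots> = (\<Sum>r<n. \<Sum>i<k. P $$ (r, i) * L $$ (i, r))"
    by (subst sum.swap) (simp add: mult.commute)
  also have "\<dots> = (\<Sum>r<n. (P * L) $$ (r, r))" using assms by (simp add: scalar_prod_def atLeast0LessThan)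
  finally show ?thesis .
qed

text \<open>The trace of \<open>P L\<close> is \<open>n\<close>, that of \<open>L P\<close> is \<open>k\<close>, and the two traces agree.\<close>

lemma dim_eq_of_right_inverse:
  fixes P L :: "complex mat"
  assumes P: "P \<in> carrier_mat n k" and L: "L \<in> carrier_mat k n" and PL: "P * L = 1\<^sub>m n"
    and diag: "\<forall>i<k. (L * P) $$ (i, i) = 1"
  shows "k = n"
proof -
  have "of_nat k = (\<Sum>i<k. (L * P) $$ (i, i))" using diag by simp
  also have "\<dots> = (\<Sum>r<n. (P * L) $$ (r, r))" by (rule sum_diag_mult_comm[OF L P])
  also have "\<dots> = of_nat n" using PL by simp
  finally show ?thesis by simp
qed

lemma length_concat_orthonormal_bases:
  assumes r: "resolution_of_identity n es" and Qs: "orthonormal_bases n es Qs"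
  shows "length (concat Qs) = n"
proof (rule dim_eq_of_right_inverse)
  show "basis_mat n Qs \<in> carrier_mat n (length (concat Qs))" by (rule basis_mat_carrier)
  show "dual_basis_mat n es Qs \<in> carrier_mat (length (concat Qs)) n" by (rule dual_basis_mat_carrier)
  show "basis_mat n Qs * dual_basis_mat n es Qs = 1\<^sub>m n" by (rule basis_mat_mult_dual_basis_mat[OF r Qs])
  have ec: "set es \<subseteq> carrier_mat n n" using r unfolding resolution_of_identity_def by auto
  have Qc: "set (concat Qs) \<subseteq> carrier_vec n" by (rule orthonormal_bases_carrier[OF Qs])
  show "\<forall>i<length (concat Qs). (dual_basis_mat n es Qs * basis_mat n Qs) $$ (i, i) = 1"
  proof (intro allI impI)
    fix i assume i: "i < length (concat Qs)"
    obtain q j where x: "indexed_basis Qs ! i = (q, j)" by fastforce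
    have "(q, j) \<in> set (indexed_basis Qs)"
      using i x nth_mem[of i "indexed_basis Qs"] map_fst_indexed_basis[of Qs] by (metis length_map)
    then have j: "j < length es" and q: "q \<in> set (Qs ! j)"
      using mem_indexed_basis Qs unfolding orthonormal_bases_def by fastforce+
    have qc: "q \<in> carrier_vec n" using Qs j q unfolding orthonormal_bases_def by auto
    have "concat Qs ! i = q" using x i map_fst_indexed_basis[of Qs] by (metis fst_conv length_map nth_map)
    then have "col (basis_mat n Qs) i = q" unfolding basis_mat_def using i qc by simp
    moreover have "row (dual_basis_mat n es Qs) i = map_vec cnj (cadj (es ! j) *\<^sub>v q)"
    proof -
      have "es ! j \<in> carrier_mat n n" by (rule subsetD[OF ec nth_mem[OF j]])
      then have "map_vec cnj (cadj (es ! j) *\<^sub>v q) \<in> carrier_vec n"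
        using mult_mat_vec_carrier[OF cadj_carrier qc] by simp
      moreover have "i < length (indexed_basis Qs)" using i by simp
      ultimately show ?thesis unfolding dual_basis_mat_def using x by (subst mat_of_rows_row) simp_all
    qed
    ultimately have "(dual_basis_mat n es Qs * basis_mat n Qs) $$ (i, i) = map_vec cnj (cadj (es ! j) *\<^sub>v q) \<bullet> q"
      using i basis_mat_carrier[of n Qs] dual_basis_mat_carrier[of n es Qs] by simp
    also have "\<dots> = hinner q (es ! j *\<^sub>v q)"
      by (rule dual_row_scalar_prod[OF subsetD[OF ec nth_mem[OF j]] qc qc])
    also have "\<dots> = hinner q q"
      using orthonormal_bases_in_fixed_space[OF Qs j q] unfolding fixed_space_def by simp
    also have "\<dots> = 1" using orthonormal_norm Qs j q unfolding orthonormal_bases_def by blast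
    finally show "(dual_basis_mat n es Qs * basis_mat n Qs) $$ (i, i) = 1" .
  qed
qed

lemma index_cadj_mult_mult:
  fixes A :: "complex mat"
  assumes P: "P \<in> carrier_mat n k" and A: "A \<in> carrier_mat n n" and i: "i < k" and i': "i' < k"
  shows "(cadj P * A * P) $$ (i, i') = hinner (col P i) (A *\<^sub>v col P i')"
proof -
  have cP: "cadj P \<in> carrier_mat k n" using P by simp
  have "(cadj P * A * P) $$ (i, i') = (cadj P * (A * P)) $$ (i, i')"
    using assoc_mult_mat[OF cP A P] by simp
  also have "\<dots> = row (cadj P) i \<bullet> col (A * P) i'" by (rule index_mult_mat) (use cP A P i i' in auto)
  also have "row (cadj P) i = map_vec cnj (col P i)" using P i by (intro eq_vecI) auto
  also have "col (A * P) i' = A *\<^sub>v col P i'" using A P i' by (intro eq_vecI) auto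
  finally show ?thesis unfolding hinner_def .
qed

lemma cadj_mat_of_cols:
  "set qs \<subseteq> carrier_vec n \<Longrightarrow> cadj (mat_of_cols n qs) = mat_of_rows n (map (map_vec cnj) qs)"
proof -
  assume qs: "set qs \<subseteq> carrier_vec n"
  have "dim_vec (qs ! i) = n" if "i < length qs" for i
    using subsetD[OF qs nth_mem[OF that]] by simp
  then show ?thesis unfolding cadj_def by (intro eq_matI) (auto simp: mat_of_cols_def mat_of_rows_def)
qed

lemma invertible_basis_mat:
  assumes r: "resolution_of_identity n es" and Qs: "orthonormal_bases n es Qs"
  shows "basis_mat n Qs \<in> carrier_mat n n" "invertible_mat (basis_mat n Qs)"
proof -
  have len: "length (concat Qs) = n" by (rule length_concat_orthonormal_bases[OF r Qs])
  show P: "basis_mat n Qs \<in> carrier_mat n n" using basis_mat_carrier[of n Qs] len by simp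
  have L: "dual_basis_mat n es Qs \<in> carrier_mat n n" using dual_basis_mat_carrier[of n es Qs] len by simp
  have PL: "basis_mat n Qs * dual_basis_mat n es Qs = 1\<^sub>m n" by (rule basis_mat_mult_dual_basis_mat[OF r Qs])
  then have "dual_basis_mat n es Qs * basis_mat n Qs = 1\<^sub>m n" by (rule mat_mult_left_right_inverse[OF P L])
  then show "invertible_mat (basis_mat n Qs)"
    using P L PL unfolding invertible_mat_def inverts_mat_def by auto
qed

lemma block_sizes_orthonormal_bases:
  assumes oi: "orth_idempotents n As t es" and Qs: "orthonormal_bases n es Qs"
  shows "block_sizes n t (map length Qs)"
proof -
  have len: "length es = t" and r: "resolution_of_identity n es"
    and nz: "\<forall>j<t. es ! j \<noteq> 0\<^sub>m n n"
    using oi unfolding orth_idempotents_iff by auto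
  have "Qs ! j \<noteq> []" if j: "j < t" for j
  proof
    assume "Qs ! j = []"
    then have "fixed_space n (es ! j) = {0\<^sub>v n}"
      using Qs j len unfolding orthonormal_bases_def by (metis lin_span.simps(1))
    moreover have "es ! j \<in> carrier_mat n n" using r j len unfolding resolution_of_identity_def by auto
    then obtain v where "v \<in> carrier_vec n" "es ! j *\<^sub>v v \<noteq> 0\<^sub>v n" using mat_nonzero_mult_vec nz j by blast
    ultimately show False using mult_vec_in_fixed_space[OF r, of j v] j len by auto
  qed
  moreover have "sum_list (map length Qs) = n"
    using length_concat_orthonormal_bases[OF r Qs] by (simp add: length_concat)
  ultimately show ?thesis using Qs len unfolding block_sizes_def orthonormal_bases_def by auto
qed

lemma block_diag_basis_mat:
  assumes h: "\<forall>A \<in> set As. hermitian_mat n A" and oi: "orth_idempotents n As t es"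
    and Qs: "orthonormal_bases n es Qs" and A: "A \<in> set As"
  shows "block_diag n (map length Qs) (cadj (basis_mat n Qs) * A * basis_mat n Qs)"
  unfolding block_diag_def
proof (intro conjI allI impI)
  have len: "length es = t" and r: "resolution_of_identity n es" using oi unfolding orth_idempotents_iff by auto
  have Ac: "A \<in> carrier_mat n n" using h A unfolding hermitian_mat_def by auto
  have P: "basis_mat n Qs \<in> carrier_mat n n" by (rule invertible_basis_mat(1)[OF r Qs])
  then show "cadj (basis_mat n Qs) * A * basis_mat n Qs \<in> carrier_mat n n" using Ac by simp
  have lenc: "length (concat Qs) = n" by (rule length_concat_orthonormal_bases[OF r Qs])
  have Qc: "set (concat Qs) \<subseteq> carrier_vec n" by (rule orthonormal_bases_carrier[OF Qs])
  have lenQ: "length Qs = t" using Qs len unfolding orthonormal_bases_def by simp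
  fix i i' assume i: "i < n" and i': "i' < n"
    and apart: "\<not> (\<exists>j<length (map length Qs). in_block (map length Qs) j i \<and> in_block (map length Qs) j i')"
  obtain j where j: "j < t" "in_block (map length Qs) j i" "concat Qs ! i \<in> set (Qs ! j)"
    using nth_concat_in_block[of i Qs] i lenc lenQ by auto
  obtain j' where j': "j' < t" "in_block (map length Qs) j' i'" "concat Qs ! i' \<in> set (Qs ! j')"
    using nth_concat_in_block[of i' Qs] i' lenc lenQ by auto
  have "concat Qs ! i \<in> map (fixed_space n) es ! j" "concat Qs ! i' \<in> map (fixed_space n) es ! j'"
    using orthonormal_bases_in_fixed_space[OF Qs] j j' len by auto
  moreover have "j \<noteq> j'" using apart j j' lenQ by auto
  ultimately have "hform A (concat Qs ! i) (concat Qs ! i') = 0"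
    using star_block_decomp_fixed_spaces[OF h oi] A j j' unfolding star_block_decomp_def by auto
  moreover have "col (basis_mat n Qs) k = concat Qs ! k" if "k < n" for k
    unfolding basis_mat_def using subsetD[OF Qc nth_mem] that lenc by simp
  ultimately show "(cadj (basis_mat n Qs) * A * basis_mat n Qs) $$ (i, i') = 0"
    using index_cadj_mult_mult[OF P Ac i i'] i i' unfolding hform_eq_hinner by simp
qed

lemma unitary_basis_mat:
  assumes r: "resolution_of_identity n es" and Qs: "orthonormal_bases n es Qs"
    and herm: "\<forall>j<length es. hermitian_mat n (es ! j)"
  shows "unitary_mat n (basis_mat n Qs)"
proof -
  have len: "length Qs = length es" using Qs unfolding orthonormal_bases_def by simp
  have P: "basis_mat n Qs \<in> carrier_mat n n" by (rule invertible_basis_mat(1)[OF r Qs])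
  have Qc: "set (concat Qs) \<subseteq> carrier_vec n" by (rule orthonormal_bases_carrier[OF Qs])
  have "map (\<lambda>(q, j). map_vec cnj (cadj (es ! j) *\<^sub>v q)) (indexed_basis Qs) = map (map_vec cnj) (concat Qs)"
    unfolding map_fst_indexed_basis[symmetric] map_map
  proof (rule map_cong[OF refl])
    fix x assume x: "x \<in> set (indexed_basis Qs)"
    have "snd x < length es" "fst x \<in> set (Qs ! snd x)" using mem_indexed_basis[OF x] len by auto
    then show "(case x of (q, j) \<Rightarrow> map_vec cnj (cadj (es ! j) *\<^sub>v q)) = (map_vec cnj \<circ> fst) x"
      using herm orthonormal_bases_in_fixed_space[OF Qs] unfolding hermitian_mat_def fixed_space_def
      by (auto split: prod.splits)
  qed
  then have "dual_basis_mat n es Qs = cadj (basis_mat n Qs)"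
    unfolding dual_basis_mat_def basis_mat_def using cadj_mat_of_cols[OF Qc] by simp
  then have "basis_mat n Qs * cadj (basis_mat n Qs) = 1\<^sub>m n" using basis_mat_mult_dual_basis_mat[OF r Qs] by simp
  then have "cadj (basis_mat n Qs) * basis_mat n Qs = 1\<^sub>m n"
    by (rule mat_mult_left_right_inverse[OF P cadj_carrier[OF P]])
  then show ?thesis unfolding unitary_mat_def using P by simp
qed

section \<open>Congruence to block diagonal form\<close>

lemma block_diag_congruence_iff:
  assumes h: "\<forall>A \<in> set As. hermitian_mat n A"
  shows "(\<exists>P ns. P \<in> carrier_mat n n \<and> invertible_mat P \<and> block_sizes n t ns \<and>
            (\<forall>A \<in> set As. block_diag n ns (cadj P * A * P)))
         \<longleftrightarrow> (\<exists>es. orth_idempotents n As t es)"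
proof
  assume "\<exists>P ns. P \<in> carrier_mat n n \<and> invertible_mat P \<and> block_sizes n t ns \<and>
            (\<forall>A \<in> set As. block_diag n ns (cadj P * A * P))"
  then obtain P ns where P: "P \<in> carrier_mat n n" and inv: "invertible_mat P"
    and bs: "block_sizes n t ns" and bd: "\<forall>A \<in> set As. block_diag n ns (cadj P * A * P)" by blast
  obtain Q where PQ: "P * Q = 1\<^sub>m n" and QP: "Q * P = 1\<^sub>m (dim_row Q)"
    using inv P unfolding invertible_mat_def inverts_mat_def by auto
  have Q: "Q \<in> carrier_mat n n"
    using arg_cong[OF PQ, of dim_col] arg_cong[OF QP, of dim_col] P by auto
  then show "\<exists>es. orth_idempotents n As t es"
    using orth_idempotents_similar_block_projs[OF h P Q PQ _ bs bd] QP by auto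
next
  assume "\<exists>es. orth_idempotents n As t es"
  then obtain es where oi: "orth_idempotents n As t es" by blast
  then have r: "resolution_of_identity n es" unfolding orth_idempotents_iff by simp
  obtain Qs where Qs: "orthonormal_bases n es Qs" using orthonormal_bases_exist[OF r] by blast
  show "\<exists>P ns. P \<in> carrier_mat n n \<and> invertible_mat P \<and> block_sizes n t ns \<and>
            (\<forall>A \<in> set As. block_diag n ns (cadj P * A * P))"
    using invertible_basis_mat[OF r Qs] block_sizes_orthonormal_bases[OF oi Qs]
      block_diag_basis_mat[OF h oi Qs] by blast
qed

lemma block_diag_unitary_congruence_iff:
  assumes h: "\<forall>A \<in> set As. hermitian_mat n A"
  shows "(\<exists>U ns. unitary_mat n U \<and> block_sizes n t ns \<and> (\<forall>A \<in> set As. block_diag n ns (cadj U * A * U)))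
         \<longleftrightarrow> (\<exists>es. orth_idempotents n As t es \<and> (\<forall>j<t. hermitian_mat n (es ! j)))"
proof
  assume "\<exists>U ns. unitary_mat n U \<and> block_sizes n t ns \<and> (\<forall>A \<in> set As. block_diag n ns (cadj U * A * U))"
  then obtain U ns where U: "unitary_mat n U" and bs: "block_sizes n t ns"
    and bd: "\<forall>A \<in> set As. block_diag n ns (cadj U * A * U)" by blast
  have Uc: "U \<in> carrier_mat n n" and UU: "cadj U * U = 1\<^sub>m n" using U unfolding unitary_mat_def by auto
  have "U * cadj U = 1\<^sub>m n" by (rule mat_mult_left_right_inverse[OF cadj_carrier[OF Uc] Uc UU])
  then have "orth_idempotents n As t (map (\<lambda>j. U * block_proj n ns j * cadj U) [0..<t])"
    by (rule orth_idempotents_similar_block_projs[OF h Uc cadj_carrier[OF Uc] _ UU bs bd])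
  moreover have "\<forall>j<t. hermitian_mat n (map (\<lambda>j. U * block_proj n ns j * cadj U) [0..<t] ! j)"
    using hermitian_unitary_similar_block_proj[OF U] by simp
  ultimately show "\<exists>es. orth_idempotents n As t es \<and> (\<forall>j<t. hermitian_mat n (es ! j))" by blast
next
  assume "\<exists>es. orth_idempotents n As t es \<and> (\<forall>j<t. hermitian_mat n (es ! j))"
  then obtain es where oi: "orth_idempotents n As t es" and herm: "\<forall>j<t. hermitian_mat n (es ! j)" by blast
  then have r: "resolution_of_identity n es" and "length es = t" unfolding orth_idempotents_iff by simp_all
  obtain Qs where Qs: "orthonormal_bases n es Qs" using orthonormal_bases_exist[OF r] by blast
  show "\<exists>U ns. unitary_mat n U \<and> block_sizes n t ns \<and> (\<forall>A \<in> set As. block_diag n ns (cadj U * A * U))"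
    using unitary_basis_mat[OF r Qs] herm \<open>length es = t\<close> block_sizes_orthonormal_bases[OF oi Qs]
      block_diag_basis_mat[OF h oi Qs] by blast
qed

theorem mainTheorem7:
  fixes n m t :: nat and As :: "complex mat list"
  assumes "length As = m"
    and "\<forall>A \<in> set As. hermitian_mat n A"
    and "t \<ge> 1"
  shows
   "bij_betw (proj_map n) {Vs. star_block_decomp n As t Vs} {es. orth_idempotents n As t es}
    \<and> ((\<exists>P ns. P \<in> carrier_mat n n \<and> invertible_mat P \<and> block_sizes n t ns \<and>
          (\<forall>A \<in> set As. block_diag n ns (cadj P * A * P)))
        \<longleftrightarrow> (\<exists>es. orth_idempotents n As t es))
    \<and> bij_betw (proj_map n) {Vs. star_block_decomp n As t Vs \<and> pairwise_orth Vs}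
         {es. orth_idempotents n As t es \<and> (\<forall>j<t. hermitian_mat n (es ! j))}
    \<and> ((\<exists>U ns. unitary_mat n U \<and> block_sizes n t ns \<and>
          (\<forall>A \<in> set As. block_diag n ns (cadj U * A * U)))
        \<longleftrightarrow> (\<exists>es. orth_idempotents n As t es \<and> (\<forall>j<t. hermitian_mat n (es ! j))))"
  using bij_betw_proj_map[OF assms(2)] block_diag_congruence_iff[OF assms(2)]
    bij_betw_proj_map_pairwise_orth[OF assms(2)] block_diag_unitary_congruence_iff[OF assms(2)]
  by blast

end
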